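(* Let $\mathcal T$ be the biregular tree with parameters $\delta_B,\delta_R\ge1$, and let $\mathcal L$ be the self-adjoint operator on $L^2(\mathcal T)$ described in the context. Let $\lambda\in\mathbb C$ and suppose that the matrix $T_0(\lambda)$ (defined in the context) has an eigenvalue $\mu^\pm(\lambda)$ with $|\mu^\pm(\lambda)|=1/\sqrt{\delta_B\delta_R}$. Then $\lambda$ is in the spectrum of $\mathcal L$, and so $\lambda$ is real.
   Context: $\mathcal T$ is the infinite tree whose vertices are partitioned into classes $\mathcal V_B,\mathcal V_R$ with every edge joining a vertex of $\mathcal V_R$ to one of $\mathcal V_B$, every vertex of $\mathcal V_B$ having degree $\delta_B+1$ and every vertex of $\mathcal V_R$ degree $\delta_R+1$. Each edge is identified with $[0,1]$, $L^2(\mathcal T)=\bigoplus_e L^2(e)$, and $\mathcal L$ acts by $-d^2/dx^2$ on each edge with domain the $f\in L^2(\mathcal T)$ continuous on $\mathcal T$, $C^1$ on each edge with $f_e'$ absolutely continuous, $f''\in L^2(\mathcal T)$, and $\sum_{e\sim v}\partial_\nu f_e(v)=0$ at each vertex $v$ (outward derivatives). With $\omega=\sqrt\lambda$, $c=\cos\omega$, $c'=-\omega\sin\omega$, $s=\sin\omega/\omega$, $s'=\cos\omega$ (entire functions of $\lambda$), put $M_0=\begin{pmatrix}c&s\\c'&s'\end{pmatrix}$, $J_B=\operatorname{diag}(1,1/\delta_B)$, $J_R=\operatorname{diag}(1,1/\delta_R)$ and $T_0(\lambda)=J_RM_0J_BM_0$; its eigenvalues are $\mu^\pm(\lambda)=\frac12\operatorname{tr}T_0\pm\sqrt{\frac14(\operatorname{tr}T_0)^2-\det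 T_0}$, with $\det T_0=1/(\delta_B\delta_R)$. *)

theory Defs
  imports "HOL-Analysis.Analysis"
begin

text \<open>Vertices have type 'v, edges type 'e. Every edge e joins src e (in VB) to tgt e (in VR);
  the edge is identified with [0,1] with x = 0 at src e and x = 1 at tgt e.\<close>

definition tree_adj :: "('e \<Rightarrow> 'v) \<Rightarrow> ('e \<Rightarrow> 'v) \<Rightarrow> 'v \<Rightarrow> 'v \<Rightarrow> bool" where
  "tree_adj src tgt u v \<longleftrightarrow> (\<exists>e. (src e = u \<and> tgt e = v) \<or> (src e = v \<and> tgt e = u))"

definition biregular_tree ::
  "('e \<Rightarrow> 'v) \<Rightarrow> ('e \<Rightarrow> 'v) \<Rightarrow> 'v set \<Rightarrow> 'v set \<Rightarrow> nat \<Rightarrow> nat \<Rightarrow> bool" where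
  "biregular_tree src tgt VB VR dB dR \<longleftrightarrow>
     VB \<inter> VR = {} \<and> VB \<union> VR = UNIV \<and>
     (\<forall>e. src e \<in> VB \<and> tgt e \<in> VR) \<and>
     inj (\<lambda>e. (src e, tgt e)) \<and>
     (\<forall>v\<in>VB. finite {e. src e = v} \<and> card {e. src e = v} = dB + 1) \<and>
     (\<forall>v\<in>VR. finite {e. tgt e = v} \<and> card {e. tgt e = v} = dR + 1) \<and>
     (\<forall>u v. (tree_adj src tgt)\<^sup>*\<^sup>* u v) \<and>
     \<not> (\<exists>vs. length vs \<ge> 3 \<and> distinct vs \<and>
            (\<forall>i < length vs. tree_adj src tgt (vs ! i) (vs ! ((i + 1) mod length vs))))"

text \<open>A function on the metric tree is f :: 'e => real => complex, f e restricted to [0,1].\<close>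

definition edge_norm2 :: "(real \<Rightarrow> complex) \<Rightarrow> real" where
  "edge_norm2 g = (LINT x:{0..1}|lborel. (cmod (g x))\<^sup>2)"

definition in_L2 :: "('e \<Rightarrow> real \<Rightarrow> complex) \<Rightarrow> bool" where
  "in_L2 f \<longleftrightarrow>
     (\<forall>e. set_borel_measurable lborel {0..1} (f e) \<and>
          set_integrable lborel {0..1} (\<lambda>x. (cmod (f e x))\<^sup>2)) \<and>
     (\<lambda>e. edge_norm2 (f e)) summable_on UNIV"

definition L2_norm :: "('e \<Rightarrow> real \<Rightarrow> complex) \<Rightarrow> real" where
  "L2_norm f = sqrt (infsum (\<lambda>e. edge_norm2 (f e)) UNIV)"

definition abs_cont_01 :: "(real \<Rightarrow> complex) \<Rightarrow> bool" where
  "abs_cont_01 g \<longleftrightarrow>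
     (\<forall>\<epsilon>>0. \<exists>\<delta>>0. \<forall>(n::nat) (a::nat \<Rightarrow> real) b.
        (\<forall>i<n. 0 \<le> a i \<and> a i \<le> b i \<and> b i \<le> 1) \<and>
        (\<forall>i<n. \<forall>j<n. i \<noteq> j \<longrightarrow> b i \<le> a j \<or> b j \<le> a i) \<and>
        (\<Sum>i<n. b i - a i) < \<delta> \<longrightarrow>
        (\<Sum>i<n. cmod (g (b i) - g (a i))) < \<epsilon>)"

text \<open>qg_op src tgt VB VR f h: f is in the domain of L and L f = h (as elements of L^2).
  d e is the derivative of f e (C^1 on [0,1]), dd e is the a.e. derivative of d e.\<close>

definition qg_op ::
  "('e \<Rightarrow> 'v) \<Rightarrow> ('e \<Rightarrow> 'v) \<Rightarrow> 'v set \<Rightarrow> 'v set \<Rightarrow>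
   ('e \<Rightarrow> real \<Rightarrow> complex) \<Rightarrow> ('e \<Rightarrow> real \<Rightarrow> complex) \<Rightarrow> bool" where
  "qg_op src tgt VB VR f h \<longleftrightarrow> in_L2 f \<and> in_L2 h \<and>
     (\<exists>d dd.
        (\<forall>e. \<forall>x\<in>{0..1}. (f e has_vector_derivative d e x) (at x within {0..1})) \<and>
        (\<forall>e. continuous_on {0..1} (d e)) \<and>
        (\<forall>e. abs_cont_01 (d e)) \<and>
        (\<forall>e. AE x in lborel. x \<in> {0..1} \<longrightarrow>
               (d e has_vector_derivative dd e x) (at x within {0..1})) \<and>
        in_L2 dd \<and>
        (\<forall>e. AE x in lborel. x \<in> {0..1} \<longrightarrow> h e x = - dd e x) \<and>
        (\<forall>v\<in>VB. \<forall>e1 e2. src e1 = v \<longrightarrow> src e2 = v \<longrightarrow> f e1 0 = f e2 0) \<and>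
        (\<forall>v\<in>VR. \<forall>e1 e2. tgt e1 = v \<longrightarrow> tgt e2 = v \<longrightarrow> f e1 1 = f e2 1) \<and>
        (\<forall>v\<in>VB. (\<Sum>e\<in>{e. src e = v}. - d e 0) = 0) \<and>
        (\<forall>v\<in>VR. (\<Sum>e\<in>{e. tgt e = v}. d e 1) = 0))"

definition qg_resolvent_set ::
  "('e \<Rightarrow> 'v) \<Rightarrow> ('e \<Rightarrow> 'v) \<Rightarrow> 'v set \<Rightarrow> 'v set \<Rightarrow> complex set" where
  "qg_resolvent_set src tgt VB VR = {lam. \<exists>C::real.
     (\<forall>g. in_L2 g \<longrightarrow> (\<exists>f h. qg_op src tgt VB VR f h \<and>
          (\<forall>e. AE x in lborel. x \<in> {0..1} \<longrightarrow> h e x - lam * f e x = g e x) \<and>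
          L2_norm f \<le> C * L2_norm g)) \<and>
     (\<forall>f h. qg_op src tgt VB VR f h \<and>
          (\<forall>e. AE x in lborel. x \<in> {0..1} \<longrightarrow> h e x - lam * f e x = 0) \<longrightarrow>
          L2_norm f = 0)}"

definition qg_spectrum ::
  "('e \<Rightarrow> 'v) \<Rightarrow> ('e \<Rightarrow> 'v) \<Rightarrow> 'v set \<Rightarrow> 'v set \<Rightarrow> complex set" where
  "qg_spectrum src tgt VB VR = UNIV - qg_resolvent_set src tgt VB VR"

definition om :: "complex \<Rightarrow> complex" where "om lam = csqrt lam"
definition cc :: "complex \<Rightarrow> complex" where "cc lam = cos (om lam)"
definition cc' :: "complex \<Rightarrow> complex" where "cc' lam = - om lam * sin (om lam)"
definition ss :: "complex \<Rightarrow> complex" where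
  "ss lam = (if lam = 0 then 1 else sin (om lam) / om lam)"
definition ss' :: "complex \<Rightarrow> complex" where "ss' lam = cos (om lam)"

definition M0 :: "complex \<Rightarrow> complex^2^2" where
  "M0 lam = vector [vector [cc lam, ss lam], vector [cc' lam, ss' lam]]"

definition Jmat :: "nat \<Rightarrow> complex^2^2" where
  "Jmat dl = vector [vector [1, 0], vector [0, 1 / of_nat dl]]"

definition T0 :: "nat \<Rightarrow> nat \<Rightarrow> complex \<Rightarrow> complex^2^2" where
  "T0 dB dR lam = Jmat dR ** M0 lam ** Jmat dB ** M0 lam"

definition tr2 :: "complex^2^2 \<Rightarrow> complex" where
  "tr2 A = A $ 1 $ 1 + A $ 2 $ 2"

definition mu_plus :: "nat \<Rightarrow> nat \<Rightarrow> complex \<Rightarrow> complex" where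
  "mu_plus dB dR lam = tr2 (T0 dB dR lam) / 2
     + csqrt ((tr2 (T0 dB dR lam))\<^sup>2 / 4 - det (T0 dB dR lam))"

definition mu_minus :: "nat \<Rightarrow> nat \<Rightarrow> complex \<Rightarrow> complex" where
  "mu_minus dB dR lam = tr2 (T0 dB dR lam) / 2
     - csqrt ((tr2 (T0 dB dR lam))\<^sup>2 / 4 - det (T0 dB dR lam))"

end

theory Submission
  imports Defs
begin

text \<open>
  Let \<mu> be an eigenvalue of \<open>T\<^sub>0(\<lambda>)\<close> with \<open>|\<mu>|\<^sup>2 = 1/(\<delta>\<^sub>B \<delta>\<^sub>R)\<close> and \<open>(a\<^sub>1, a\<^sub>2)\<close> an eigenvector.
  Root the tree at a red vertex and propagate the Cauchy data \<open>(a\<^sub>1, a\<^sub>2)\<close> outwards along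
  solutions of \<open>-y'' = \<lambda> y\<close>, using the Kirchhoff conditions at the vertices: after one blue and
  one red generation of edges the solution is multiplied by \<mu>, while the number of edges is
  multiplied by \<open>\<delta>\<^sub>B \<delta>\<^sub>R\<close>, so all even generations carry the same \<open>L\<^sup>2\<close> mass.
  Modulating this radial solution by the tent profile \<open>min(j, 2N - j)\<close> in the generation pair
  \<open>j\<close>, interpolated along the odd generations by a smoothstep with vanishing end slopes, gives
  \<open>f\<^sub>N\<close> in the domain of \<open>\<L>\<close> with \<open>\<parallel>f\<^sub>N\<parallel>\<^sup>2 \<ge> c N\<^sup>2\<close>, whereas \<open>(\<L> - \<lambda>) f\<^sub>N\<close> only sees the
  increments of the profile, so \<open>\<parallel>(\<L> - \<lambda>) f\<^sub>N\<parallel>\<^sup>2 \<le> K N\<close>. Hence \<open>\<L> - \<lambda>\<close> has no bounded inverse.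

  Reality of \<lambda>: the second eigenvalue \<open>det T\<^sub>0 / \<mu>\<close> equals \<open>\<mu>\<^sup>*\<close>, so \<open>tr T\<^sub>0 = 2 Re \<mu>\<close> is real
  with \<open>|tr T\<^sub>0| \<le> 2/\<surd>(\<delta>\<^sub>B \<delta>\<^sub>R)\<close>; the identity
  \<open>tr T\<^sub>0 = cos\<^sup>2 \<omega> (1 + 1/\<delta>\<^sub>B)(1 + 1/\<delta>\<^sub>R) - (1/\<delta>\<^sub>B + 1/\<delta>\<^sub>R)\<close> then places \<open>cos 2\<omega>\<close> in
  \<open>[-1, 1]\<close>, which forces \<omega>, and hence \<open>\<lambda> = \<omega>\<^sup>2\<close>, to be real.
\<close>

section \<open>The transfer matrix\<close>

lemma om_squared: "(om lam)\<^sup>2 = lam"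
  unfolding om_def by simp

lemma om_eq_0_iff: "om lam = 0 \<longleftrightarrow> lam = 0"
  unfolding om_def by simp

lemma ss_mult_cc': "ss lam * cc' lam = (cc lam)\<^sup>2 - 1"
proof (cases "lam = 0")
  case True
  then show ?thesis unfolding ss_def cc'_def cc_def om_def by simp
next
  case False
  then have "om lam \<noteq> 0" using om_eq_0_iff by simp
  then have "ss lam * cc' lam = - (sin (om lam))\<^sup>2"
    unfolding ss_def cc'_def using False by (simp add: power2_eq_square)
  then show ?thesis unfolding cc_def using sin_squared_eq[of "om lam"] by simp
qed

lemma ss'_eq_cc: "ss' lam = cc lam"
  unfolding ss'_def cc_def by simp

lemma det_M0: "det (M0 lam) = 1"
  using ss_mult_cc'[of lam] unfolding det_2 M0_def ss'_eq_cc
  by (simp add: power2_eq_square algebra_simps)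

lemma det_Jmat: "det (Jmat d) = 1 / of_nat d"
  unfolding det_2 Jmat_def by simp

lemma det_T0: "det (T0 dB dR lam) = 1 / (of_nat dB * of_nat dR)"
  unfolding T0_def by (simp add: det_mul det_M0 det_Jmat)

lemma T0_entries:
  fixes dB dR :: nat
  defines "p \<equiv> 1 / (of_nat dB :: complex)" and "q \<equiv> 1 / (of_nat dR :: complex)"
  shows "T0 dB dR lam $ 1 $ 1 = cc lam * cc lam + p * ss lam * cc' lam"
    and "T0 dB dR lam $ 1 $ 2 = cc lam * ss lam + p * ss lam * ss' lam"
    and "T0 dB dR lam $ 2 $ 1 = q * cc' lam * cc lam + p * q * ss' lam * cc' lam"
    and "T0 dB dR lam $ 2 $ 2 = q * cc' lam * ss lam + p * q * ss' lam * ss' lam"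
  unfolding T0_def M0_def Jmat_def matrix_matrix_mult_def assms
  by (simp_all add: sum_2 algebra_simps)

lemma tr2_T0:
  "tr2 (T0 dB dR lam) =
     (cc lam)\<^sup>2 * (1 + 1 / of_nat dB) * (1 + 1 / of_nat dR) - (1 / of_nat dB + 1 / of_nat dR)"
proof -
  have "c * c + p * s * c' + (q * c' * s + p * q * c * c) = c\<^sup>2 * (1 + p) * (1 + q) - (p + q)"
    if "s * c' = c\<^sup>2 - 1" for c s c' p q :: complex
  proof -
    have "p * s * c' = p * (c\<^sup>2 - 1)" and "q * c' * s = q * (c\<^sup>2 - 1)"
      using that by (metis mult.assoc mult.commute)+
    then show ?thesis by (simp only:) (simp add: algebra_simps power2_eq_square)
  qed
  from this[OF ss_mult_cc'] show ?thesis
    unfolding tr2_def T0_entries ss'_eq_cc .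
qed

lemma mu_char_poly:
  assumes "mu = mu_plus dB dR lam \<or> mu = mu_minus dB dR lam"
  shows "mu\<^sup>2 - tr2 (T0 dB dR lam) * mu + det (T0 dB dR lam) = 0"
proof -
  have "(t / 2 + s)\<^sup>2 - t * (t / 2 + s) + d = 0 \<and> (t / 2 - s)\<^sup>2 - t * (t / 2 - s) + d = 0"
    if "s\<^sup>2 = t\<^sup>2 / 4 - d" for t d s :: complex
  proof -
    have "(t / 2 + r)\<^sup>2 - t * (t / 2 + r) + d = r\<^sup>2 - t\<^sup>2 / 4 + d" for r
      by (simp add: power2_eq_square field_simps)
    from this[of s] this[of "- s"] that show ?thesis by simp
  qed
  from this[OF power2_csqrt] assms show ?thesis
    unfolding mu_plus_def mu_minus_def by blast
qed

lemma eigenvector_2x2_exists: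
  fixes T :: "complex^2^2"
  assumes "mu\<^sup>2 - tr2 T * mu + det T = 0"
  obtains a1 a2 where "a1 \<noteq> 0 \<or> a2 \<noteq> 0"
    and "T$1$1 * a1 + T$1$2 * a2 = mu * a1" and "T$2$1 * a1 + T$2$2 * a2 = mu * a2"
proof -
  have char: "(mu - T$1$1) * (mu - T$2$2) = T$1$2 * T$2$1"
    using assms unfolding tr2_def det_2 by (simp add: power2_eq_square algebra_simps)
  consider "T$1$2 \<noteq> 0" | "T$2$1 \<noteq> 0" | "T$1$2 = 0" "T$2$1 = 0" by blast
  then show ?thesis
  proof cases
    case 1
    with char show ?thesis by (intro that[of "T$1$2" "mu - T$1$1"]) (simp_all add: algebra_simps)
  next
    case 2
    with char show ?thesis by (intro that[of "mu - T$2$2" "T$2$1"]) (simp_all add: algebra_simps)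
  next
    case 3
    with char have "mu = T$1$1 \<or> mu = T$2$2" by simp
    with 3 show ?thesis using that[of 1 0] that[of 0 1] by auto
  qed
qed

lemma Im_eq_0_if_cos_in_unit_interval:
  fixes z :: complex and y :: real
  assumes "cos z = of_real y" and "\<bar>y\<bar> \<le> 1"
  shows "Im z = 0"
proof (rule ccontr)
  assume Im_z: "Im z \<noteq> 0"
  let ?x = "exp (Im z)"
  have "?x > 0" "?x \<noteq> 1" using Im_z by simp_all
  have exp_minus_Im: "exp (- Im z) = 1 / ?x" by (simp add: exp_minus field_simps)
  have "exp (- Im z) - ?x \<noteq> 0" using exp_minus_Im \<open>?x > 0\<close> \<open>?x \<noteq> 1\<close> by (auto simp: field_simps)
  moreover have "Im (cos z) = 0" using assms(1) by simp
  ultimately have "sin (Re z) = 0" unfolding Im_cos by simp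
  then have "\<bar>cos (Re z)\<bar> = 1" using sin_cos_squared_add[of "Re z"] by (simp add: abs_square_eq_1)
  moreover have "?x + 1 / ?x > 2"
  proof -
    have "(?x - 1)\<^sup>2 > 0" using \<open>?x \<noteq> 1\<close> by simp
    then have "?x * ?x + 1 > 2 * ?x" by (simp add: power2_eq_square algebra_simps)
    then show ?thesis using \<open>?x > 0\<close> by (simp add: field_simps)
  qed
  ultimately have "\<bar>Re (cos z)\<bar> > 1"
    unfolding Re_cos exp_minus_Im using \<open>?x > 0\<close> by (simp add: abs_mult)
  then show False using assms by simp
qed

text \<open>On the critical circle the two eigenvalues \<open>\<mu>\<close> and \<open>det T\<^sub>0 / \<mu>\<close> are complex conjugate.\<close>

lemma tr2_T0_eq_2_Re:
  assumes "dB \<ge> 1" and "dR \<ge> 1"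
    and char: "mu\<^sup>2 - tr2 (T0 dB dR lam) * mu + det (T0 dB dR lam) = 0"
    and mu_norm: "cmod mu = 1 / sqrt (real (dB * dR))"
  shows "tr2 (T0 dB dR lam) = of_real (2 * Re mu)"
proof -
  let ?t = "tr2 (T0 dB dR lam)"
  have "mu \<noteq> 0" using mu_norm assms(1,2) by auto
  have "mu * cnj mu = of_real ((cmod mu)\<^sup>2)" by (rule complex_norm_square[symmetric])
  also have "\<dots> = det (T0 dB dR lam)" using mu_norm assms(1,2) by (simp add: det_T0 power_divide)
  also have "\<dots> = mu * (?t - mu)" using char by (simp add: power2_eq_square algebra_simps)
  finally have "cnj mu = ?t - mu" using \<open>mu \<noteq> 0\<close> by simp
  then show ?thesis using complex_add_cnj[of mu] by simp
qed

lemma Im_eq_0_if_tr2_T0_real_bounded: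
  assumes dB: "dB \<ge> 1" and dR: "dR \<ge> 1"
    and tr_real: "tr2 (T0 dB dR lam) = of_real t" and tr_bound: "\<bar>t\<bar> \<le> 2 / sqrt (real (dB * dR))"
  shows "Im lam = 0"
proof -
  define a where "a = 1 / sqrt (real dB)"
  define b where "b = 1 / sqrt (real dR)"
  have "a > 0" "b > 0" using dB dR unfolding a_def b_def by simp_all
  have a2: "a\<^sup>2 = 1 / real dB" and b2: "b\<^sup>2 = 1 / real dR"
    unfolding a_def b_def using dB dR by (simp_all add: power_divide)
  have t_bound: "\<bar>t\<bar> \<le> 2 * (a * b)"
    using tr_bound unfolding a_def b_def by (simp add: real_sqrt_mult)
  define X where "X = (t + a\<^sup>2 + b\<^sup>2) / ((1 + a\<^sup>2) * (1 + b\<^sup>2))"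
  have denom_pos: "(1 + a\<^sup>2) * (1 + b\<^sup>2) > 0" by (simp add: add_pos_nonneg)
  have "0 \<le> t + a\<^sup>2 + b\<^sup>2"
    using t_bound sum_squares_ge_zero[of "a - b" 0] by (simp add: power2_eq_square algebra_simps abs_le_iff)
  moreover have "t + a\<^sup>2 + b\<^sup>2 \<le> (1 + a\<^sup>2) * (1 + b\<^sup>2)"
    using t_bound sum_squares_ge_zero[of "1 - a * b" 0] by (simp add: power2_eq_square algebra_simps abs_le_iff)
  ultimately have "0 \<le> X" "X \<le> 1" unfolding X_def using denom_pos by simp_all
  have "of_real t = (cc lam)\<^sup>2 * (1 + of_real (a\<^sup>2)) * (1 + of_real (b\<^sup>2)) - (of_real (a\<^sup>2) + of_real (b\<^sup>2))"
    using tr_real tr2_T0[of dB dR lam] unfolding a2 b2 by simp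
  then have "(cc lam)\<^sup>2 * of_real ((1 + a\<^sup>2) * (1 + b\<^sup>2)) = of_real (t + a\<^sup>2 + b\<^sup>2)"
    by (simp add: algebra_simps)
  then have "(cc lam)\<^sup>2 = of_real X"
    unfolding X_def using denom_pos by (simp add: field_simps del: of_real_mult of_real_add)
  then have "cos (2 * om lam) = of_real (2 * X - 1)" unfolding cc_def cos_double_cos by simp
  moreover have "\<bar>2 * X - 1\<bar> \<le> 1" using \<open>0 \<le> X\<close> \<open>X \<le> 1\<close> by simp
  ultimately have "Im (2 * om lam) = 0" by (rule Im_eq_0_if_cos_in_unit_interval)
  then have "Im ((om lam)\<^sup>2) = 0" by (simp add: power2_eq_square)
  then show ?thesis using om_squared by simp
qed

section \<open>Solutions of \<open>-y'' = \<lambda> y\<close> on an edge\<close>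

definition cos_sol :: "complex \<Rightarrow> complex \<Rightarrow> complex" where
  "cos_sol lam z = cos (om lam * z)"

definition sin_sol :: "complex \<Rightarrow> complex \<Rightarrow> complex" where
  "sin_sol lam z = (if lam = 0 then z else sin (om lam * z) / om lam)"

definition cos_sol' :: "complex \<Rightarrow> complex \<Rightarrow> complex" where
  "cos_sol' lam z = - om lam * sin (om lam * z)"

definition sol :: "complex \<Rightarrow> complex \<Rightarrow> complex \<Rightarrow> complex \<Rightarrow> complex" where
  "sol lam u1 u2 z = u1 * cos_sol lam z + u2 * sin_sol lam z"

definition sol' :: "complex \<Rightarrow> complex \<Rightarrow> complex \<Rightarrow> complex \<Rightarrow> complex" where
  "sol' lam u1 u2 z = u1 * cos_sol' lam z + u2 * cos_sol lam z"

lemma cos_sol_deriv: "(cos_sol lam has_field_derivative cos_sol' lam z) (at z)"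
proof -
  have "((\<lambda>z. cos (om lam * z)) has_field_derivative - sin (om lam * z) * om lam) (at z)"
    by (rule DERIV_chain2[OF DERIV_cos DERIV_cmult_Id])
  then show ?thesis unfolding cos_sol_def[abs_def] cos_sol'_def by (simp add: mult.commute)
qed

lemma sin_sol_deriv: "(sin_sol lam has_field_derivative cos_sol lam z) (at z)"
proof (cases "lam = 0")
  case True
  then have "sin_sol lam = (\<lambda>z. z)" and "cos_sol lam z = 1"
    by (simp_all add: sin_sol_def cos_sol_def om_def fun_eq_iff)
  then show ?thesis by (simp only: DERIV_ident)
next
  case False
  then have "om lam \<noteq> 0" using om_eq_0_iff by simp
  have "((\<lambda>z. sin (om lam * z)) has_field_derivative cos (om lam * z) * om lam) (at z)"
    by (rule DERIV_chain2[OF DERIV_sin DERIV_cmult_Id])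
  then have "((\<lambda>z. sin (om lam * z) / om lam) has_field_derivative cos (om lam * z) * om lam / om lam) (at z)"
    by (rule DERIV_cdivide)
  moreover have "sin_sol lam = (\<lambda>z. sin (om lam * z) / om lam)"
    using False by (simp add: sin_sol_def fun_eq_iff)
  ultimately show ?thesis unfolding cos_sol_def using \<open>om lam \<noteq> 0\<close> by simp
qed

lemma om_mult_om: "om lam * (om lam * x) = lam * x"
  using om_squared[of lam] by (simp add: power2_eq_square mult.assoc[symmetric])

lemma cos_sol'_eq: "cos_sol' lam z = - lam * sin_sol lam z"
proof (cases "lam = 0")
  case False
  then have "om lam \<noteq> 0" using om_eq_0_iff by simp
  have "lam * sin (om lam * z) / om lam = om lam * (om lam * sin (om lam * z)) / om lam"
    by (simp add: om_mult_om)
  also have "\<dots> = om lam * sin (om lam * z)" using \<open>om lam \<noteq> 0\<close> by simp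
  finally show ?thesis unfolding cos_sol'_def sin_sol_def using False by simp
qed (simp add: cos_sol'_def sin_sol_def om_eq_0_iff)

lemma cos_sol'_deriv: "(cos_sol' lam has_field_derivative - lam * cos_sol lam z) (at z)"
  unfolding cos_sol'_def[abs_def] cos_sol_def
  by (auto intro!: derivative_eq_intros simp: om_mult_om mult.commute)

lemma sol_deriv: "(sol lam u1 u2 has_field_derivative sol' lam u1 u2 z) (at z)"
  unfolding sol_def[abs_def] sol'_def by (intro DERIV_add DERIV_cmult cos_sol_deriv sin_sol_deriv)

lemma sol'_deriv: "(sol' lam u1 u2 has_field_derivative - lam * sol lam u1 u2 z) (at z)"
proof -
  have "(sol' lam u1 u2 has_field_derivative u1 * (- lam * cos_sol lam z) + u2 * cos_sol' lam z) (at z)"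
    unfolding sol'_def[abs_def] by (intro DERIV_add DERIV_cmult cos_sol_deriv cos_sol'_deriv)
  then show ?thesis unfolding sol_def cos_sol'_eq by (simp add: algebra_simps)
qed

lemma sol_0: "sol lam u1 u2 0 = u1" and sol'_0: "sol' lam u1 u2 0 = u2"
  unfolding sol_def sol'_def cos_sol_def sin_sol_def cos_sol'_def by simp_all

lemma sol_1: "sol lam u1 u2 1 = cc lam * u1 + ss lam * u2"
  and sol'_1: "sol' lam u1 u2 1 = cc' lam * u1 + cc lam * u2"
  unfolding sol_def sol'_def cos_sol_def sin_sol_def cos_sol'_def cc_def ss_def cc'_def
  using om_eq_0_iff[of lam] by (simp_all add: mult.commute)

lemma isCont_sol: "isCont (sol lam u1 u2) z" and isCont_sol': "isCont (sol' lam u1 u2) z"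
  using DERIV_isCont[OF sol_deriv] DERIV_isCont[OF sol'_deriv] .

text \<open>The cubic \<open>3z\<^sup>2 - 2z\<^sup>3\<close> goes from 0 to 1 with vanishing slope at both ends, so gluing
  it into an amplitude keeps the Kirchhoff conditions intact.\<close>

definition smoothstep :: "complex \<Rightarrow> complex" where "smoothstep z = 3 * z\<^sup>2 - 2 * z ^ 3"
definition smoothstep' :: "complex \<Rightarrow> complex" where "smoothstep' z = 6 * z - 6 * z\<^sup>2"
definition smoothstep'' :: "complex \<Rightarrow> complex" where "smoothstep'' z = 6 - 12 * z"

lemma smoothstep_deriv: "(smoothstep has_field_derivative smoothstep' z) (at z)"
  unfolding smoothstep_def[abs_def] smoothstep'_def
  by (auto intro!: derivative_eq_intros simp: power2_eq_square)

lemma smoothstep'_deriv: "(smoothstep' has_field_derivative smoothstep'' z) (at z)"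
  unfolding smoothstep'_def[abs_def] smoothstep''_def
  by (auto intro!: derivative_eq_intros simp: power2_eq_square)

lemma smoothstep_simps [simp]:
  "smoothstep 0 = 0" "smoothstep 1 = 1" "smoothstep' 0 = 0" "smoothstep' 1 = 0"
  unfolding smoothstep_def smoothstep'_def by simp_all

lemma isCont_smoothstep': "isCont smoothstep' z" and isCont_smoothstep'': "isCont smoothstep'' z"
  using DERIV_isCont[OF smoothstep'_deriv] unfolding smoothstep''_def by (auto intro!: continuous_intros)

definition tent :: "nat \<Rightarrow> nat \<Rightarrow> real" where
  "tent N j = real (min j (2 * N - j))"

lemma tent_0 [simp]: "tent N 0 = 0"
  and tent_self [simp]: "tent N N = real N"
  unfolding tent_def by simp_all

lemma tent_eq_0: "2 * N \<le> j \<Longrightarrow> tent N j = 0"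
  unfolding tent_def by simp

lemma tent_increment_bound: "(tent N (Suc j) - tent N j)\<^sup>2 \<le> 1"
proof -
  have "\<bar>tent N (Suc j) - tent N j\<bar> \<le> 1" unfolding tent_def by auto
  then show ?thesis by (simp add: abs_square_le_1)
qed

lemma sol_data_eq_0_if_sol_vanishes:
  assumes "\<And>x. x \<in> {0..1} \<Longrightarrow> sol lam u1 u2 (of_real x) = 0"
  shows "u1 = 0" and "u2 = 0"
proof -
  show "u1 = 0" using assms[of 0] by (simp add: sol_0)
  have "((\<lambda>x. sol lam u1 u2 (of_real x)) has_vector_derivative sol' lam u1 u2 0) (at 0 within {0..1})"
    using has_vector_derivative_real_field[OF sol_deriv, of lam u1 u2 0] by simp
  moreover have "((\<lambda>x. sol lam u1 u2 (of_real x)) has_vector_derivative 0) (at 0 within {0..1})"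
    by (rule has_vector_derivative_transform[of 0 "{0..1}" _ "\<lambda>x. 0"]) (auto simp: assms)
  moreover have "at (0::real) within {0..1} = at_right 0" by (rule at_within_Icc_at_right) simp
  then have "at (0::real) within {0..1} \<noteq> bot" using trivial_limit_at_right_real[of 0] by simp
  ultimately show "u2 = 0" using vector_derivative_unique_within by (metis sol'_0)
qed

locale T0_eigenvector =
  fixes dB dR :: nat and lam mu a1 a2 :: complex
  assumes dB_pos: "dB \<ge> 1" and dR_pos: "dR \<ge> 1"
    and eigen1: "T0 dB dR lam $ 1 $ 1 * a1 + T0 dB dR lam $ 1 $ 2 * a2 = mu * a1"
    and eigen2: "T0 dB dR lam $ 2 $ 1 * a1 + T0 dB dR lam $ 2 $ 2 * a2 = mu * a2"
begin

text \<open>\<open>(a\<^sub>1, a\<^sub>2)\<close> are the Cauchy data \<open>(y, y')\<close> at the red end of a red-to-blue edge, and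
  \<open>(b\<^sub>1, b\<^sub>2) = J\<^sub>B M\<^sub>0 (a\<^sub>1, a\<^sub>2)\<close> those at the blue end of each of the following blue-to-red
  edges.\<close>

definition b1 :: complex where "b1 = cc lam * a1 + ss lam * a2"
definition b2 :: complex where "b2 = (cc' lam * a1 + ss' lam * a2) / of_nat dB"

lemma sol_a_1: "sol lam a1 a2 1 = b1"
  and sol'_a_1: "sol' lam a1 a2 1 = of_nat dB * b2"
  using dB_pos unfolding sol_1 sol'_1 b1_def b2_def ss'_eq_cc by simp_all

lemma sol_b_1: "sol lam b1 b2 1 = mu * a1"
proof -
  have "sol lam b1 b2 1 = T0 dB dR lam $ 1 $ 1 * a1 + T0 dB dR lam $ 1 $ 2 * a2"
    unfolding sol_1 b1_def b2_def T0_entries using dB_pos by (simp add: field_simps)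
  then show ?thesis using eigen1 by simp
qed

lemma sol'_b_1: "sol' lam b1 b2 1 = of_nat dR * (mu * a2)"
proof -
  have "sol' lam b1 b2 1 = of_nat dR * (T0 dB dR lam $ 2 $ 1 * a1 + T0 dB dR lam $ 2 $ 2 * a2)"
    unfolding sol'_1 b1_def b2_def T0_entries ss'_eq_cc using dB_pos dR_pos by (simp add: field_simps)
  then show ?thesis using eigen2 by simp
qed

text \<open>The profile on an edge of level \<open>k\<close> (the depth of its end nearer to the red root),
  parametrised from that end. Level \<open>2j\<close> carries \<open>tent N j \<cdot> \<mu>\<^sup>j\<close> times the solution with data
  \<open>(a\<^sub>1, a\<^sub>2)\<close>; level \<open>2j + 1\<close> interpolates between the amplitudes \<open>tent N j\<close> and \<open>tent N (j + 1)\<close>.\<close>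

definition amplitude :: "nat \<Rightarrow> nat \<Rightarrow> complex" where
  "amplitude N k = of_real (tent N (k div 2)) * mu ^ (k div 2)"

definition amplitude_step :: "nat \<Rightarrow> nat \<Rightarrow> complex" where
  "amplitude_step N k =
     (if even k then 0 else of_real (tent N (Suc (k div 2)) - tent N (k div 2)) * mu ^ (k div 2))"

definition data1 :: "nat \<Rightarrow> complex" where "data1 k = (if even k then a1 else b1)"
definition data2 :: "nat \<Rightarrow> complex" where "data2 k = (if even k then a2 else b2)"

definition profile :: "nat \<Rightarrow> nat \<Rightarrow> complex \<Rightarrow> complex" where
  "profile N k z = (amplitude N k + amplitude_step N k * smoothstep z) * sol lam (data1 k) (data2 k) z"

definition profile' :: "nat \<Rightarrow> nat \<Rightarrow> complex \<Rightarrow> complex" where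
  "profile' N k z = amplitude_step N k * smoothstep' z * sol lam (data1 k) (data2 k) z
     + (amplitude N k + amplitude_step N k * smoothstep z) * sol' lam (data1 k) (data2 k) z"

text \<open>The residual \<open>-y'' - \<lambda> y\<close> of the profile only involves the derivatives of the smoothstep.\<close>

definition residual :: "nat \<Rightarrow> nat \<Rightarrow> complex \<Rightarrow> complex" where
  "residual N k z = - amplitude_step N k *
     (smoothstep'' z * sol lam (data1 k) (data2 k) z + 2 * smoothstep' z * sol' lam (data1 k) (data2 k) z)"

definition profile'' :: "nat \<Rightarrow> nat \<Rightarrow> complex \<Rightarrow> complex" where
  "profile'' N k z = - residual N k z - lam * profile N k z"

lemma profile_deriv: "(profile N k has_field_derivative profile' N k z) (at z)"
  unfolding profile_def[abs_def] profile'_def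
  by (auto intro!: derivative_eq_intros smoothstep_deriv[THEN DERIV_chain2] sol_deriv[THEN DERIV_chain2]
      simp: algebra_simps)

lemma profile'_deriv: "(profile' N k has_field_derivative profile'' N k z) (at z)"
  unfolding profile'_def[abs_def] profile''_def residual_def profile_def
  by (auto intro!: derivative_eq_intros smoothstep_deriv[THEN DERIV_chain2]
      smoothstep'_deriv[THEN DERIV_chain2] sol_deriv[THEN DERIV_chain2] sol'_deriv[THEN DERIV_chain2]
      simp: algebra_simps)

lemma continuous_on_residual: "continuous_on UNIV (residual N k)"
  unfolding residual_def[abs_def] continuous_on_eq_continuous_at[OF open_UNIV]
  by (auto intro!: continuous_intros isCont_sol isCont_sol' isCont_smoothstep' isCont_smoothstep'')

lemma continuous_on_profile'': "continuous_on UNIV (profile'' N k)"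
proof -
  have "continuous_on UNIV (profile N k)"
    using DERIV_isCont[OF profile_deriv] by (simp add: continuous_at_imp_continuous_on)
  then show ?thesis
    unfolding profile''_def[abs_def] by (intro continuous_intros continuous_on_residual)
qed

lemma profile'_level_0: "profile' N 0 z = 0"
  unfolding profile'_def amplitude_def amplitude_step_def by simp

lemma profile_eq_0:
  assumes "4 * N \<le> k"
  shows "profile N k z = 0" and "profile' N k z = 0" and "residual N k z = 0" and "profile'' N k z = 0"
proof -
  have "amplitude N k = 0" "amplitude_step N k = 0"
    using assms unfolding amplitude_def amplitude_step_def by (simp_all add: tent_eq_0)
  then show "profile N k z = 0" "profile' N k z = 0" "residual N k z = 0" "profile'' N k z = 0"
    unfolding profile''_def profile_def profile'_def residual_def by simp_all
qed

lemma profile_junction: "profile N k 1 = profile N (Suc k) 0"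
proof (cases "even k")
  case True
  then have "Suc k div 2 = k div 2" by presburger
  with True show ?thesis
    unfolding profile_def amplitude_step_def amplitude_def data1_def data2_def by (simp add: sol_0 sol_a_1)
next
  case False
  then have "Suc k div 2 = Suc (k div 2)" by presburger
  with False show ?thesis
    unfolding profile_def amplitude_step_def amplitude_def data1_def data2_def
    by (simp add: sol_0 sol_b_1 algebra_simps)
qed

lemma profile'_junction: "profile' N k 1 = of_nat (if even k then dB else dR) * profile' N (Suc k) 0"
proof (cases "even k")
  case True
  then have "Suc k div 2 = k div 2" by presburger
  with True show ?thesis
    unfolding profile'_def amplitude_step_def amplitude_def data1_def data2_def by (simp add: sol'_0 sol'_a_1)
next
  case False
  then have "Suc k div 2 = Suc (k div 2)" by presburger
  with False show ?thesis
    unfolding profile'_def amplitude_step_def amplitude_def data1_def data2_def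
    by (simp add: sol'_0 sol'_b_1 algebra_simps)
qed

end

section \<open>The biregular tree rooted at a red vertex\<close>

locale rooted_biregular_tree =
  fixes src tgt :: "'e \<Rightarrow> 'v" and VB VR :: "'v set" and dB dR :: nat and root :: 'v
  assumes tree: "biregular_tree src tgt VB VR dB dR" and root_red: "root \<in> VR"
begin

abbreviation adj where "adj \<equiv> tree_adj src tgt"

lemma colours_disjoint: "VB \<inter> VR = {}" and colours_cover: "VB \<union> VR = UNIV"
  and src_blue: "src e \<in> VB" and tgt_red: "tgt e \<in> VR"
  and edge_inj: "inj (\<lambda>e. (src e, tgt e))"
  and finite_src: "v \<in> VB \<Longrightarrow> finite {e. src e = v}" and card_src: "v \<in> VB \<Longrightarrow> card {e. src e = v} = dB + 1"
  and finite_tgt: "v \<in> VR \<Longrightarrow> finite {e. tgt e = v}" and card_tgt: "v \<in> VR \<Longrightarrow> card {e. tgt e = v} = dR + 1"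
  and connected: "adj\<^sup>*\<^sup>* u w"
  and acyclic: "\<not> (\<exists>vs. length vs \<ge> 3 \<and> distinct vs \<and>
            (\<forall>i < length vs. adj (vs ! i) (vs ! ((i + 1) mod length vs))))"
  using tree unfolding biregular_tree_def by blast+

lemma src_not_red: "src e \<notin> VR" and tgt_not_blue: "tgt e \<notin> VB"
  using src_blue tgt_red colours_disjoint by blast+

lemma blue_if_not_red: "v \<notin> VR \<Longrightarrow> v \<in> VB"
  using colours_cover by blast

lemma adj_sym: "adj u v \<Longrightarrow> adj v u"
  unfolding tree_adj_def by blast

lemma adj_colours: "adj u v \<Longrightarrow> u \<in> VR \<longleftrightarrow> v \<notin> VR"
  unfolding tree_adj_def using src_not_red tgt_red by blast

lemma adj_edge: "adj (src e) (tgt e)"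
  unfolding tree_adj_def by blast

definition depth :: "'v \<Rightarrow> nat" where "depth v = (LEAST n. (adj ^^ n) root v)"

lemma depth_path: "(adj ^^ depth v) root v"
proof -
  obtain n where "(adj ^^ n) root v" using rtranclp_imp_relpowp[OF connected] by blast
  then show ?thesis unfolding depth_def by (rule LeastI)
qed

lemma depth_le: "(adj ^^ n) root v \<Longrightarrow> depth v \<le> n"
  unfolding depth_def by (rule Least_le)

lemma depth_adj_le: "adj u v \<Longrightarrow> depth v \<le> Suc (depth u)"
  using depth_le relpowp_Suc_I[OF depth_path] by blast

lemma red_iff_even_path: "(adj ^^ n) root v \<Longrightarrow> v \<in> VR \<longleftrightarrow> even n"
proof (induction n arbitrary: v)
  case 0
  then show ?case using root_red by auto
next
  case (Suc n)
  then obtain u where "(adj ^^ n) root u" "adj u v" by (auto elim: relpowp_Suc_E)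
  then show ?case using Suc.IH adj_colours by auto
qed

lemma red_iff_even_depth: "v \<in> VR \<longleftrightarrow> even (depth v)"
  using red_iff_even_path[OF depth_path] .

lemma depth_eq_0_iff: "depth v = 0 \<longleftrightarrow> v = root"
proof
  assume "depth v = 0"
  then show "v = root" using depth_path[of v] by simp
next
  assume "v = root"
  then show "depth v = 0" using depth_le[of 0 v] by simp
qed

lemma adj_depth: "adj u v \<Longrightarrow> depth v = Suc (depth u) \<or> depth u = Suc (depth v)"
proof -
  assume uv: "adj u v"
  have "depth v \<le> Suc (depth u)" "depth u \<le> Suc (depth v)" using uv depth_adj_le adj_sym by blast+
  moreover have "even (depth u) \<longleftrightarrow> odd (depth v)" using adj_colours[OF uv] red_iff_even_depth by blast
  moreover have "a \<le> Suc b \<Longrightarrow> b \<le> Suc a \<Longrightarrow> (even a \<longleftrightarrow> odd b) \<Longrightarrow> a = Suc b \<or> b = Suc a"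
    for a b :: nat by presburger
  ultimately show ?thesis by blast
qed

lemma parent_exists: "depth v = Suc n \<Longrightarrow> \<exists>u. adj u v \<and> depth u = n"
proof -
  assume v: "depth v = Suc n"
  then obtain u where u: "(adj ^^ n) root u" "adj u v" using depth_path[of v] by (auto elim: relpowp_Suc_E)
  have "depth u \<le> n" using depth_le[OF u(1)] .
  moreover have "depth v \<le> Suc (depth u)" using depth_adj_le[OF u(2)] .
  ultimately show ?thesis using u v by auto
qed

text \<open>Two distinct vertices of the same depth \<open>k\<close> are joined by a path of length at least 3
  through vertices of depth at most \<open>k\<close>: follow both back to their lowest common ancestor.\<close>

lemma path_between_same_depth:
  "depth u1 = k \<Longrightarrow> depth u2 = k \<Longrightarrow> u1 \<noteq> u2 \<Longrightarrow>
   \<exists>ps. 3 \<le> length ps \<and> distinct ps \<and> hd ps = u1 \<and> last ps = u2 \<and> successively adj ps \<and>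
        (\<forall>x\<in>set ps. depth x \<le> k)"
proof (induction k arbitrary: u1 u2)
  case 0
  then show ?case using depth_eq_0_iff by auto
next
  case (Suc k)
  obtain w1 where w1: "adj w1 u1" "depth w1 = k" using parent_exists Suc.prems(1) by blast
  obtain w2 where w2: "adj w2 u2" "depth w2 = k" using parent_exists Suc.prems(2) by blast
  have "adj u1 w1" using adj_sym[OF w1(1)] .
  show ?case
  proof (cases "w1 = w2")
    case True
    have "w1 \<noteq> u1" "w1 \<noteq> u2" using w1(2) Suc.prems(1,2) n_not_Suc_n by metis+
    moreover have "successively adj [u1, w1, u2]" using \<open>adj u1 w1\<close> w2(1) True by simp
    moreover have "\<forall>x\<in>set [u1, w1, u2]. depth x \<le> Suc k" using w1(2) Suc.prems(1,2) by simp
    ultimately show ?thesis using Suc.prems(3) by (intro exI[of _ "[u1, w1, u2]"]) simp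
  next
    case False
    then obtain qs where qs: "3 \<le> length qs" "distinct qs" "hd qs = w1" "last qs = w2"
      "successively adj qs" "\<forall>x\<in>set qs. depth x \<le> k"
      using Suc.IH[OF w1(2) w2(2)] by blast
    have "u1 \<notin> set qs" "u2 \<notin> set qs" using qs(6) Suc.prems(1,2) by fastforce+
    have "qs \<noteq> []" using qs(1) by auto
    have "successively adj (qs @ [u2])"
      using qs(4,5) \<open>qs \<noteq> []\<close> w2(1) by (simp add: successively_append_iff)
    then have "successively adj (u1 # qs @ [u2])"
      using qs(3) \<open>qs \<noteq> []\<close> \<open>adj u1 w1\<close> by (cases qs) (simp_all add: successively_Cons)
    moreover have "distinct (u1 # qs @ [u2])"
      using qs(2) \<open>u1 \<notin> set qs\<close> \<open>u2 \<notin> set qs\<close> Suc.prems(3) by simp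
    moreover have "\<forall>x\<in>set (u1 # qs @ [u2]). depth x \<le> Suc k" using qs(6) Suc.prems(1,2) by auto
    ultimately show ?thesis using qs(1) by (intro exI[of _ "u1 # qs @ [u2]"]) simp
  qed
qed

lemma closed_path_is_cycle:
  assumes "successively adj vs" and "vs \<noteq> []" and "adj (last vs) (hd vs)"
  shows "\<forall>i < length vs. adj (vs ! i) (vs ! ((i + 1) mod length vs))"
proof (intro allI impI)
  fix i assume i: "i < length vs"
  show "adj (vs ! i) (vs ! ((i + 1) mod length vs))"
  proof (cases "Suc i < length vs")
    case True
    then show ?thesis using successively_nth[OF assms(1) True] by simp
  next
    case False
    then have "i = length vs - 1" using i by simp
    then show ?thesis using assms(2,3) by (simp add: last_conv_nth hd_conv_nth)
  qed
qed

lemma parent_unique: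
  assumes "adj u1 v" and "adj u2 v" and "depth u1 = k" and "depth u2 = k" and "depth v = Suc k"
  shows "u1 = u2"
proof (rule ccontr)
  assume "u1 \<noteq> u2"
  then obtain ps where ps: "3 \<le> length ps" "distinct ps" "hd ps = u1" "last ps = u2"
      "successively adj ps" "\<forall>x\<in>set ps. depth x \<le> k"
    using path_between_same_depth assms(3,4) by blast
  have "ps \<noteq> []" using ps(1) by auto
  have "v \<notin> set ps" using ps(6) assms(5) by fastforce
  have "successively adj (v # ps)"
    using ps(3,5) \<open>ps \<noteq> []\<close> adj_sym[OF assms(1)] by (cases ps) (simp_all add: successively_Cons)
  moreover have "adj (last (v # ps)) (hd (v # ps))" using ps(4) \<open>ps \<noteq> []\<close> assms(2) by simp
  ultimately have "\<forall>i < length (v # ps). adj ((v # ps) ! i) ((v # ps) ! ((i + 1) mod length (v # ps)))"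
    by (intro closed_path_is_cycle) simp_all
  moreover have "length (v # ps) \<ge> 3" "distinct (v # ps)" using ps(1,2) \<open>v \<notin> set ps\<close> by simp_all
  ultimately show False using acyclic by blast
qed

text \<open>The level of an edge is the depth of its inner end; its outer end is one deeper.
  Since the root is red, edges of even level point outwards from red to blue.\<close>

definition level :: "'e \<Rightarrow> nat" where "level e = min (depth (src e)) (depth (tgt e))"

lemma level_cases:
  "(even (level e) \<and> depth (tgt e) = level e \<and> depth (src e) = Suc (level e)) \<or>
   (odd (level e) \<and> depth (src e) = level e \<and> depth (tgt e) = Suc (level e))"
proof -
  have "odd (depth (src e))" "even (depth (tgt e))"
    using red_iff_even_depth src_not_red tgt_red by blast+
  with adj_depth[OF adj_edge[of e]] show ?thesis unfolding level_def by (elim disjE) simp_all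
qed

lemma level_even: "even (level e) \<Longrightarrow> depth (tgt e) = level e \<and> depth (src e) = Suc (level e)"
  and level_odd: "odd (level e) \<Longrightarrow> depth (src e) = level e \<and> depth (tgt e) = Suc (level e)"
  using level_cases[of e] by metis+

definition outer :: "'e \<Rightarrow> 'v" where "outer e = (if even (level e) then src e else tgt e)"
definition inner :: "'e \<Rightarrow> 'v" where "inner e = (if even (level e) then tgt e else src e)"

lemma depth_outer: "depth (outer e) = Suc (level e)"
  and depth_inner: "depth (inner e) = level e"
  unfolding outer_def inner_def using level_even level_odd by (cases "even (level e)"; simp)+

lemma outer_red_iff: "outer e \<in> VR \<longleftrightarrow> odd (level e)"
  using red_iff_even_depth[of "outer e"] depth_outer[of e] by simp

lemma outer_ne_root: "outer e \<noteq> root"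
  using depth_outer[of e] depth_eq_0_iff[of "outer e"] by simp

definition incident :: "'v \<Rightarrow> 'e set" where "incident w = {e. src e = w \<or> tgt e = w}"

lemma incident_blue: "w \<in> VB \<Longrightarrow> incident w = {e. src e = w}"
  and incident_red: "w \<in> VR \<Longrightarrow> incident w = {e. tgt e = w}"
  unfolding incident_def using tgt_not_blue src_not_red by fastforce+

lemma finite_incident: "finite (incident w)"
  using incident_red finite_tgt incident_blue finite_src blue_if_not_red by (cases "w \<in> VR") auto

lemma card_incident: "card (incident w) = (if w \<in> VR then dR + 1 else dB + 1)"
  using incident_red card_tgt incident_blue card_src blue_if_not_red by auto

lemma inner_incident: "e \<in> incident (inner e)" and outer_incident: "e \<in> incident (outer e)"
  unfolding incident_def inner_def outer_def by simp_all

lemma incident_inner_or_outer: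
  "e \<in> incident w \<Longrightarrow> (inner e = w \<and> outer e \<noteq> w) \<or> (outer e = w \<and> inner e \<noteq> w)"
proof -
  assume "e \<in> incident w"
  then have "src e = w \<or> tgt e = w" unfolding incident_def by simp
  moreover have "src e \<noteq> tgt e" using src_not_red tgt_red by metis
  ultimately show ?thesis unfolding inner_def outer_def by (cases "even (level e)") auto
qed

lemma adj_inner_outer: "adj (inner e) (outer e)"
  using adj_edge[of e] adj_sym[OF adj_edge[of e]] unfolding inner_def outer_def by simp

lemma outer_inj: "outer e1 = outer e2 \<Longrightarrow> e1 = e2"
proof -
  assume outer_eq: "outer e1 = outer e2"
  then have "level e1 = level e2" using depth_outer[of e1] depth_outer[of e2] by simp
  moreover have "inner e1 = inner e2"
    using parent_unique[OF adj_inner_outer[of e1], of "inner e2"] adj_inner_outer[of e2] outer_eq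
      depth_inner depth_outer calculation by metis
  ultimately have "src e1 = src e2 \<and> tgt e1 = tgt e2"
    using outer_eq unfolding inner_def outer_def by (cases "even (level e1)") simp_all
  then show ?thesis using edge_inj unfolding inj_def by simp
qed

lemma outer_surj: "w \<noteq> root \<Longrightarrow> \<exists>e. outer e = w"
proof -
  assume "w \<noteq> root"
  then obtain n where n: "depth w = Suc n" using depth_eq_0_iff not0_implies_Suc by metis
  then obtain u where u: "adj u w" "depth u = n" using parent_exists by blast
  then obtain e where e: "(src e = u \<and> tgt e = w) \<or> (src e = w \<and> tgt e = u)"
    unfolding tree_adj_def by blast
  then have "level e = n" using n u(2) unfolding level_def by auto
  then have "depth (outer e) = depth w" using depth_outer n by simp
  moreover have "outer e = u \<or> outer e = w" using e unfolding outer_def by auto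
  ultimately have "outer e = w" using u(2) n by auto
  then show ?thesis by blast
qed

definition children :: "'v \<Rightarrow> 'e set" where "children w = {e. inner e = w}"

lemma children_subset: "children w \<subseteq> incident w"
  unfolding children_def using inner_incident by blast

lemma finite_children: "finite (children w)"
  using finite_incident finite_subset[OF children_subset] by blast

lemma incident_eq_insert_children:
  assumes "w \<noteq> root"
  obtains p where "outer p = w" and "incident w = insert p (children w)" and "p \<notin> children w"
proof -
  obtain p where p: "outer p = w" using outer_surj assms by blast
  have "incident w \<subseteq> insert p (children w)"
    using incident_inner_or_outer outer_inj p unfolding children_def by blast
  moreover have "insert p (children w) \<subseteq> incident w" using children_subset p outer_incident by blast
  moreover have "p \<notin> children w" using p incident_inner_or_outer[OF outer_incident[of p]]
    unfolding children_def by simp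
  ultimately show ?thesis using that p by blast
qed

lemma incident_root: "incident root = children root"
  using children_subset incident_inner_or_outer outer_ne_root unfolding children_def by blast

lemma card_children: "w \<noteq> root \<Longrightarrow> card (children w) = (if w \<in> VR then dR else dB)"
proof -
  assume "w \<noteq> root"
  then obtain p where "incident w = insert p (children w)" "p \<notin> children w"
    using incident_eq_insert_children by blast
  then have "card (incident w) = Suc (card (children w))" using finite_children by simp
  then show ?thesis using card_incident[of w] by (simp split: if_splits)
qed

lemma sum_incident:
  fixes \<phi> :: "'e \<Rightarrow> complex"
  assumes "w \<noteq> root" and "\<And>e. outer e = w \<Longrightarrow> \<phi> e = X" and "\<And>e. inner e = w \<Longrightarrow> \<phi> e = Y"
  shows "sum \<phi> (incident w) = X + of_nat (if w \<in> VR then dR else dB) * Y"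
proof -
  obtain p where p: "outer p = w" "incident w = insert p (children w)" "p \<notin> children w"
    using incident_eq_insert_children assms(1) by blast
  have "sum \<phi> (incident w) = \<phi> p + sum \<phi> (children w)" using p finite_children by simp
  also have "sum \<phi> (children w) = of_nat (card (children w)) * Y"
    using assms(3) unfolding children_def by simp
  finally show ?thesis using card_children[OF assms(1)] assms(2)[OF p(1)] by simp
qed

definition generation :: "nat \<Rightarrow> 'e set" where "generation k = {e. level e = k}"

lemma generation_0: "generation 0 = children root"
  unfolding generation_def children_def using depth_inner depth_eq_0_iff by metis

lemma generation_Suc: "generation (Suc k) = (\<Union>e\<in>generation k. children (outer e))"
proof
  show "generation (Suc k) \<subseteq> (\<Union>e\<in>generation k. children (outer e))"
  proof
    fix e' assume "e' \<in> generation (Suc k)"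
    then have "depth (inner e') = Suc k" using depth_inner[of e'] unfolding generation_def by simp
    then obtain p where "outer p = inner e'" and "level p = k"
      using outer_surj depth_eq_0_iff depth_outer by (metis Suc_inject nat.distinct(1))
    then show "e' \<in> (\<Union>e\<in>generation k. children (outer e))"
      unfolding generation_def children_def by auto
  qed
  show "(\<Union>e\<in>generation k. children (outer e)) \<subseteq> generation (Suc k)"
  proof
    fix e' assume "e' \<in> (\<Union>e\<in>generation k. children (outer e))"
    then obtain e where "level e = k" "inner e' = outer e" unfolding generation_def children_def by auto
    then show "e' \<in> generation (Suc k)"
      using depth_inner[of e'] depth_outer[of e] unfolding generation_def by simp
  qed
qed

lemma finite_generation: "finite (generation k)"
  by (induction k) (simp_all add: generation_0 generation_Suc finite_children)

lemma card_generation_Suc: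
  "card (generation (Suc k)) = card (generation k) * (if even k then dB else dR)"
proof -
  have "card (generation (Suc k)) = (\<Sum>e\<in>generation k. card (children (outer e)))"
    unfolding generation_Suc
  proof (rule card_UN_disjoint[OF finite_generation])
    show "\<forall>e1\<in>generation k. \<forall>e2\<in>generation k. e1 \<noteq> e2 \<longrightarrow> children (outer e1) \<inter> children (outer e2) = {}"
      by (auto simp: children_def dest: outer_inj)
  qed (simp add: finite_children)
  also have "\<dots> = (\<Sum>e\<in>generation k. if even k then dB else dR)"
    using card_children[OF outer_ne_root] outer_red_iff unfolding generation_def by simp
  finally show ?thesis by simp
qed

lemma card_generation:
  "card (generation (2 * j)) = (dR + 1) * (dB * dR) ^ j"
  "card (generation (2 * j + 1)) = (dR + 1) * dB * (dB * dR) ^ j"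
proof (induction j)
  case 0
  have "card (generation 0) = dR + 1"
    using generation_0 incident_root card_incident[of root] root_red by simp
  then show "card (generation (2 * 0)) = (dR + 1) * (dB * dR) ^ 0"
    and "card (generation (2 * 0 + 1)) = (dR + 1) * dB * (dB * dR) ^ 0"
    using card_generation_Suc[of 0] by simp_all
next
  case (Suc j)
  show "card (generation (2 * Suc j)) = (dR + 1) * (dB * dR) ^ Suc j"
    using card_generation_Suc[of "2 * j + 1"] Suc.IH(2) by (simp add: algebra_simps)
  then show "card (generation (2 * Suc j + 1)) = (dR + 1) * dB * (dB * dR) ^ Suc j"
    using card_generation_Suc[of "2 * Suc j"] by (simp add: algebra_simps)
qed

end

lemma norm_diff_le_by_derivative_bound:
  fixes g :: "real \<Rightarrow> complex"
  assumes deriv: "\<And>x. (g has_vector_derivative g' x) (at x)"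
    and bound: "\<And>x. x \<in> {0..1} \<Longrightarrow> norm (g' x) \<le> B"
    and "0 \<le> a" "a \<le> b" "b \<le> 1"
  shows "norm (g b - g a) \<le> B * (b - a)"
proof (cases "a = b")
  case False
  then have "a < b" using \<open>a \<le> b\<close> by simp
  have "continuous_on {a..b} g"
    using deriv has_vector_derivative_continuous continuous_at_imp_continuous_on by blast
  then obtain x where x: "x \<in> {a<..<b}" "norm (g b - g a) \<le> norm ((b - a) *\<^sub>R g' x)"
    using mvt_general[OF \<open>a < b\<close>, of g "\<lambda>x h. h *\<^sub>R g' x"] deriv
    unfolding has_vector_derivative_def by blast
  have "norm ((b - a) *\<^sub>R g' x) = (b - a) * norm (g' x)" using \<open>a < b\<close> by simp
  also have "\<dots> \<le> (b - a) * B" using bound[of x] x(1) assms(3-5) \<open>a < b\<close> by (intro mult_left_mono) auto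
  finally show ?thesis using x(2) by (simp add: mult.commute)
qed simp

definition small_intervals_01 :: "nat \<Rightarrow> (nat \<Rightarrow> real) \<Rightarrow> (nat \<Rightarrow> real) \<Rightarrow> real \<Rightarrow> bool" where
  "small_intervals_01 n a b \<delta> \<longleftrightarrow>
     (\<forall>i<n. 0 \<le> a i \<and> a i \<le> b i \<and> b i \<le> 1) \<and>
     (\<forall>i<n. \<forall>j<n. i \<noteq> j \<longrightarrow> b i \<le> a j \<or> b j \<le> a i) \<and> (\<Sum>i<n. b i - a i) < \<delta>"

definition variation_sum :: "(real \<Rightarrow> complex) \<Rightarrow> nat \<Rightarrow> (nat \<Rightarrow> real) \<Rightarrow> (nat \<Rightarrow> real) \<Rightarrow> real" where
  "variation_sum g n a b = (\<Sum>i<n. cmod (g (b i) - g (a i)))"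

lemma abs_cont_01_iff:
  "abs_cont_01 g \<longleftrightarrow>
     (\<forall>\<epsilon>>0. \<exists>\<delta>>0. \<forall>n a b. small_intervals_01 n a b \<delta> \<longrightarrow> variation_sum g n a b < \<epsilon>)"
  unfolding abs_cont_01_def small_intervals_01_def variation_sum_def by simp

lemma small_intervals_01_mono: "small_intervals_01 n a b \<delta> \<Longrightarrow> \<delta> \<le> \<delta>' \<Longrightarrow> small_intervals_01 n a b \<delta>'"
  unfolding small_intervals_01_def by auto

lemma abs_cont_01_if_derivative:
  fixes g :: "real \<Rightarrow> complex"
  assumes deriv: "\<And>x. (g has_vector_derivative g' x) (at x)" and cont: "continuous_on {0..1} g'"
  shows "abs_cont_01 g"
proof -
  have "bounded (g' ` {0..1})" using cont by (intro compact_imp_bounded compact_continuous_image) auto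
  then obtain B where "B > 0" and bound: "\<And>x. x \<in> {0..1} \<Longrightarrow> norm (g' x) \<le> B"
    using bounded_pos by (metis imageI)
  show ?thesis unfolding abs_cont_01_iff
  proof (intro allI impI)
    fix \<epsilon> :: real assume "\<epsilon> > 0"
    show "\<exists>\<delta>>0. \<forall>n a b. small_intervals_01 n a b \<delta> \<longrightarrow> variation_sum g n a b < \<epsilon>"
    proof (intro exI[of _ "\<epsilon> / B"] conjI allI impI)
      show "\<epsilon> / B > 0" using \<open>\<epsilon> > 0\<close> \<open>B > 0\<close> by simp
      fix n a b assume small: "small_intervals_01 n a b (\<epsilon> / B)"
      have "variation_sum g n a b \<le> (\<Sum>i<n. B * (b i - a i))"
        using small norm_diff_le_by_derivative_bound[OF deriv bound]
        unfolding small_intervals_01_def variation_sum_def by (intro sum_mono) auto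
      also have "\<dots> = B * (\<Sum>i<n. b i - a i)" by (simp add: sum_distrib_left)
      also have "\<dots> < \<epsilon>" using small \<open>B > 0\<close> unfolding small_intervals_01_def by (simp add: field_simps)
      finally show "variation_sum g n a b < \<epsilon>" .
    qed
  qed
qed

lemma variation_sum_diff_le:
  "variation_sum (\<lambda>x. f x - g x) n a b \<le> variation_sum f n a b + variation_sum g n a b"
proof -
  have "cmod ((f (b i) - g (b i)) - (f (a i) - g (a i))) \<le> cmod (f (b i) - f (a i)) + cmod (g (b i) - g (a i))"
    for i
    using norm_triangle_ineq4[of "f (b i) - f (a i)" "g (b i) - g (a i)"] by (simp add: algebra_simps)
  then show ?thesis unfolding variation_sum_def sum.distrib[symmetric] by (rule sum_mono)
qed

lemma abs_cont_01_diff: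
  assumes "abs_cont_01 f" and "abs_cont_01 g"
  shows "abs_cont_01 (\<lambda>x. f x - g x)"
  unfolding abs_cont_01_iff
proof (intro allI impI)
  fix \<epsilon> :: real assume "\<epsilon> > 0"
  then obtain d1 d2 where "d1 > 0" and d1: "\<forall>n a b. small_intervals_01 n a b d1 \<longrightarrow> variation_sum f n a b < \<epsilon> / 2"
    and "d2 > 0" and d2: "\<forall>n a b. small_intervals_01 n a b d2 \<longrightarrow> variation_sum g n a b < \<epsilon> / 2"
    using assms[unfolded abs_cont_01_iff, THEN spec, of "\<epsilon> / 2"] by auto
  show "\<exists>\<delta>>0. \<forall>n a b. small_intervals_01 n a b \<delta> \<longrightarrow> variation_sum (\<lambda>x. f x - g x) n a b < \<epsilon>"
  proof (intro exI[of _ "min d1 d2"] conjI allI impI)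
    show "min d1 d2 > 0" using \<open>d1 > 0\<close> \<open>d2 > 0\<close> by simp
    fix n a b assume "small_intervals_01 n a b (min d1 d2)"
    then have "small_intervals_01 n a b d1" and "small_intervals_01 n a b d2"
      by (auto elim: small_intervals_01_mono)
    have "variation_sum (\<lambda>x. f x - g x) n a b \<le> variation_sum f n a b + variation_sum g n a b"
      by (rule variation_sum_diff_le)
    also have "\<dots> < \<epsilon> / 2 + \<epsilon> / 2"
      using d1 d2 \<open>small_intervals_01 n a b d1\<close> \<open>small_intervals_01 n a b d2\<close> by (intro add_strict_mono) auto
    finally show "variation_sum (\<lambda>x. f x - g x) n a b < \<epsilon>" by simp
  qed
qed

lemma continuous_on_of_real_comp:
  "continuous_on UNIV G \<Longrightarrow> continuous_on UNIV (\<lambda>x::real. G (complex_of_real x))"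
  by (rule continuous_on_compose2[of UNIV G]) (auto intro!: continuous_intros)

lemma edge_L2_if_continuous:
  fixes G :: "complex \<Rightarrow> complex"
  assumes "continuous_on UNIV G"
  shows "set_borel_measurable lborel {0..1} (\<lambda>x. G (of_real x))"
    and "set_integrable lborel {0..1} (\<lambda>x. (cmod (G (of_real x)))\<^sup>2)"
proof -
  have cont: "continuous_on UNIV (\<lambda>x::real. G (of_real x))"
    using continuous_on_of_real_comp[OF assms] .
  show "set_borel_measurable lborel {0..1} (\<lambda>x. G (of_real x))"
    unfolding set_borel_measurable_def
    using borel_measurable_continuous_on_indicator[of "{0..1}" "\<lambda>x::real. G (of_real x)"] cont
    by (simp add: continuous_on_subset)
  have "continuous_on {0..1} (\<lambda>x::real. (cmod (G (of_real x)))\<^sup>2)"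
    using cont by (auto intro!: continuous_intros intro: continuous_on_subset)
  then show "set_integrable lborel {0..1} (\<lambda>x. (cmod (G (of_real x)))\<^sup>2)"
    unfolding set_integrable_def by (intro borel_integrable_compact) auto
qed

lemma edge_norm2_nonneg: "edge_norm2 g \<ge> 0"
  unfolding edge_norm2_def set_lebesgue_integral_def
  by (intro Bochner_Integration.integral_nonneg) (simp add: indicator_def)

lemma edge_norm2_scale: "edge_norm2 (\<lambda>x. c * g x) = (cmod c)\<^sup>2 * edge_norm2 g"
  unfolding edge_norm2_def by (simp add: norm_mult power_mult_distrib)

lemma L2_norm_nonneg: "L2_norm f \<ge> 0"
  unfolding L2_norm_def by (simp add: infsum_nonneg edge_norm2_nonneg)

lemma L2_norm_squared: "(L2_norm f)\<^sup>2 = infsum (\<lambda>e. edge_norm2 (f e)) UNIV"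
  unfolding L2_norm_def by (simp add: infsum_nonneg edge_norm2_nonneg)

lemma in_L2_if_continuous_finite_support:
  fixes G :: "'e \<Rightarrow> complex \<Rightarrow> complex"
  assumes "\<And>e. continuous_on UNIV (G e)" and "finite S" and "\<And>e z. e \<notin> S \<Longrightarrow> G e z = 0"
  shows "in_L2 (\<lambda>e x. G e (of_real x))"
  unfolding in_L2_def
proof (intro conjI allI)
  fix e
  show "set_borel_measurable lborel {0..1} (\<lambda>x. G e (of_real x))"
    and "set_integrable lborel {0..1} (\<lambda>x. (cmod (G e (of_real x)))\<^sup>2)"
    using edge_L2_if_continuous[OF assms(1)] by auto
next
  have "(\<lambda>e. edge_norm2 (\<lambda>x. G e (of_real x))) summable_on S" using assms(2) by simp
  then show "(\<lambda>e. edge_norm2 (\<lambda>x. G e (of_real x))) summable_on UNIV"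
    using assms(3) by (subst summable_on_cong_neutral[of S]) (auto simp: edge_norm2_def)
qed

lemma norm_diff_squared_le: "(cmod (a - b))\<^sup>2 \<le> 2 * (cmod a)\<^sup>2 + 2 * (cmod b)\<^sup>2"
proof -
  have "cmod (a - b) \<le> cmod a + cmod b" by (rule norm_triangle_ineq4)
  then have "(cmod (a - b))\<^sup>2 \<le> (cmod a + cmod b)\<^sup>2" by (intro power_mono) auto
  also have "\<dots> \<le> 2 * (cmod a)\<^sup>2 + 2 * (cmod b)\<^sup>2"
    using sum_squares_ge_zero[of "cmod a - cmod b" 0] by (simp add: power2_eq_square algebra_simps)
  finally show ?thesis .
qed

lemma edge_L2_diff:
  fixes F G :: "real \<Rightarrow> complex"
  assumes F: "set_borel_measurable lborel {0..1} F" "set_integrable lborel {0..1} (\<lambda>x. (cmod (F x))\<^sup>2)"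
    and G: "set_borel_measurable lborel {0..1} G" "set_integrable lborel {0..1} (\<lambda>x. (cmod (G x))\<^sup>2)"
  shows "set_borel_measurable lborel {0..1} (\<lambda>x. F x - G x)"
    and "set_integrable lborel {0..1} (\<lambda>x. (cmod (F x - G x))\<^sup>2)"
    and "edge_norm2 (\<lambda>x. F x - G x) \<le> 2 * edge_norm2 F + 2 * edge_norm2 G"
proof -
  have "(\<lambda>x. indicator {0..1} x *\<^sub>R (F x - G x)) = (\<lambda>x. indicator {0..1} x *\<^sub>R F x - indicator {0..1} x *\<^sub>R G x)"
    by (auto simp: scaleR_diff_right)
  then show meas: "set_borel_measurable lborel {0..1} (\<lambda>x. F x - G x)"
    using F(1) G(1) unfolding set_borel_measurable_def by simp
  have norm_indicator: "(\<lambda>x. indicator {0..1} x *\<^sub>R (cmod (F x - G x))\<^sup>2)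
      = (\<lambda>x. (cmod (indicator {0..1} x *\<^sub>R (F x - G x)))\<^sup>2)"
    by (auto simp: indicator_def)
  have meas_sq: "set_borel_measurable lborel {0..1} (\<lambda>x. (cmod (F x - G x))\<^sup>2)"
    using meas unfolding set_borel_measurable_def norm_indicator by measurable
  have majorant: "set_integrable lborel {0..1} (\<lambda>x. 2 * (cmod (F x))\<^sup>2 + 2 * (cmod (G x))\<^sup>2)"
    using F(2) G(2) by auto
  show int: "set_integrable lborel {0..1} (\<lambda>x. (cmod (F x - G x))\<^sup>2)"
    by (rule set_integrable_bound[OF majorant meas_sq]) (auto simp: norm_diff_squared_le)
  have "edge_norm2 (\<lambda>x. F x - G x) \<le> (LINT x:{0..1}|lborel. 2 * (cmod (F x))\<^sup>2 + 2 * (cmod (G x))\<^sup>2)"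
    unfolding edge_norm2_def by (rule set_integral_mono[OF int majorant]) (rule norm_diff_squared_le)
  also have "\<dots> = 2 * edge_norm2 F + 2 * edge_norm2 G"
    unfolding edge_norm2_def using F(2) G(2) by (simp add: set_integral_add)
  finally show "edge_norm2 (\<lambda>x. F x - G x) \<le> 2 * edge_norm2 F + 2 * edge_norm2 G" .
qed

lemma in_L2_diff:
  assumes "in_L2 f" and "in_L2 g"
  shows "in_L2 (\<lambda>e x. f e x - g e x)"
  unfolding in_L2_def
proof (intro conjI allI)
  fix e
  show "set_borel_measurable lborel {0..1} (\<lambda>x. f e x - g e x)"
    and "set_integrable lborel {0..1} (\<lambda>x. (cmod (f e x - g e x))\<^sup>2)"
    using assms unfolding in_L2_def by (intro edge_L2_diff; auto)+
next
  have "(\<lambda>e. 2 * edge_norm2 (f e) + 2 * edge_norm2 (g e)) summable_on UNIV"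
    using assms unfolding in_L2_def by (intro summable_on_add summable_on_cmult_right) auto
  then show "(\<lambda>e. edge_norm2 (\<lambda>x. f e x - g e x)) summable_on UNIV"
    by (rule summable_on_comparison_test)
      (use assms in \<open>auto simp: in_L2_def edge_norm2_nonneg intro: edge_L2_diff\<close>)
qed

lemma edge_norm2_eq_0_if_L2_norm_eq_0:
  assumes "in_L2 f" and "L2_norm f = 0"
  shows "edge_norm2 (f e) = 0"
proof -
  have "infsum (\<lambda>e. edge_norm2 (f e)) {e} \<le> infsum (\<lambda>e. edge_norm2 (f e)) UNIV"
    using assms(1) by (intro infsum_mono_neutral) (auto simp: in_L2_def edge_norm2_nonneg)
  also have "\<dots> = 0" using assms(2) L2_norm_squared[of f] by simp
  finally show ?thesis using edge_norm2_nonneg[of "f e"] by simp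
qed

lemma edge_norm2_eq_if_edge_norm2_diff_eq_0:
  assumes F: "set_integrable lborel {0..1} (\<lambda>x. (cmod (F x))\<^sup>2)"
    and G: "set_integrable lborel {0..1} (\<lambda>x. (cmod (G x))\<^sup>2)"
    and FG: "set_integrable lborel {0..1} (\<lambda>x. (cmod (F x - G x))\<^sup>2)"
    and diff_0: "edge_norm2 (\<lambda>x. F x - G x) = 0"
  shows "edge_norm2 F = edge_norm2 G"
proof -
  have "AE x in lborel. indicator {0..1} x *\<^sub>R (cmod (F x - G x))\<^sup>2 = 0"
    using diff_0 integral_nonneg_eq_0_iff_AE[OF FG[unfolded set_integrable_def]]
    unfolding edge_norm2_def set_lebesgue_integral_def by (simp add: indicator_def)
  then have "AE x in lborel. indicator {0..1} x *\<^sub>R (cmod (F x))\<^sup>2 = indicator {0..1} x *\<^sub>R (cmod (G x))\<^sup>2"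
    by eventually_elim (auto simp: indicator_def)
  then show ?thesis
    unfolding edge_norm2_def set_lebesgue_integral_def
    using F G unfolding set_integrable_def by (intro integral_cong_AE) (auto intro: borel_measurable_integrable)
qed

lemma L2_norm_eq_if_L2_norm_diff_eq_0:
  assumes f: "in_L2 f" and g: "in_L2 g" and diff_0: "L2_norm (\<lambda>e x. f e x - g e x) = 0"
  shows "L2_norm f = L2_norm g"
proof -
  have "edge_norm2 (f e) = edge_norm2 (g e)" for e
    using f g in_L2_diff[OF f g] edge_norm2_eq_0_if_L2_norm_eq_0[OF in_L2_diff[OF f g] diff_0]
    unfolding in_L2_def by (intro edge_norm2_eq_if_edge_norm2_diff_eq_0) auto
  then show ?thesis unfolding L2_norm_def by simp
qed

lemma edge_norm2_pos:
  fixes F :: "real \<Rightarrow> complex"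
  assumes cont: "continuous_on {0..1} F" and "x0 \<in> {0..1}" and "F x0 \<noteq> 0"
  shows "edge_norm2 F > 0"
proof (rule ccontr)
  define q where "q x = (cmod (F x))\<^sup>2" for x
  have q_cont: "continuous_on {0..1} q" unfolding q_def using cont by (intro continuous_intros)
  then have "set_integrable lborel {0..1} q"
    unfolding set_integrable_def by (intro borel_integrable_compact) auto
  assume "\<not> edge_norm2 F > 0"
  then have "edge_norm2 F = 0" using edge_norm2_nonneg[of F] by simp
  with \<open>set_integrable lborel {0..1} q\<close> have "(q has_integral 0) (cbox 0 1)"
    unfolding edge_norm2_def q_def[symmetric]
    by (metis set_borel_integral_eq_integral has_integral_integral cbox_interval)
  moreover have "0 \<le> q x" for x unfolding q_def by simp
  ultimately have "q x0 = 0"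
    using q_cont \<open>x0 \<in> {0..1}\<close> by (intro has_integral_0_cbox_imp_0[of 0 1 q x0]) (auto simp: cbox_interval)
  then show False using \<open>F x0 \<noteq> 0\<close> unfolding q_def by simp
qed

section \<open>Weyl sequences and the resolvent set\<close>

lemma qg_opI:
  assumes "in_L2 f" and "in_L2 h" and "in_L2 dd"
    and "\<And>e x. x \<in> {0..1} \<Longrightarrow> (f e has_vector_derivative d e x) (at x within {0..1})"
    and "\<And>e. continuous_on {0..1} (d e)" and "\<And>e. abs_cont_01 (d e)"
    and "\<And>e. AE x in lborel. x \<in> {0..1} \<longrightarrow> (d e has_vector_derivative dd e x) (at x within {0..1})"
    and "\<And>e. AE x in lborel. x \<in> {0..1} \<longrightarrow> h e x = - dd e x"
    and "\<And>v e1 e2. v \<in> VB \<Longrightarrow> src e1 = v \<Longrightarrow> src e2 = v \<Longrightarrow> f e1 0 = f e2 0"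
    and "\<And>v e1 e2. v \<in> VR \<Longrightarrow> tgt e1 = v \<Longrightarrow> tgt e2 = v \<Longrightarrow> f e1 1 = f e2 1"
    and "\<And>v. v \<in> VB \<Longrightarrow> (\<Sum>e\<in>{e. src e = v}. - d e 0) = 0"
    and "\<And>v. v \<in> VR \<Longrightarrow> (\<Sum>e\<in>{e. tgt e = v}. d e 1) = 0"
  shows "qg_op src tgt VB VR f h"
  unfolding qg_op_def using assms by blast

lemma qg_opE:
  fixes f h :: "'e \<Rightarrow> real \<Rightarrow> complex"
  assumes "qg_op src tgt VB VR f h"
  obtains d dd :: "'e \<Rightarrow> real \<Rightarrow> complex" where "in_L2 f" and "in_L2 h" and "in_L2 dd"
    and "\<And>e x. x \<in> {0..1} \<Longrightarrow> (f e has_vector_derivative d e x) (at x within {0..1})"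
    and "\<And>e. continuous_on {0..1} (d e)" and "\<And>e. abs_cont_01 (d e)"
    and "\<And>e. AE x in lborel. x \<in> {0..1} \<longrightarrow> (d e has_vector_derivative dd e x) (at x within {0..1})"
    and "\<And>e. AE x in lborel. x \<in> {0..1} \<longrightarrow> h e x = - dd e x"
    and "\<And>v e1 e2. v \<in> VB \<Longrightarrow> src e1 = v \<Longrightarrow> src e2 = v \<Longrightarrow> f e1 0 = f e2 0"
    and "\<And>v e1 e2. v \<in> VR \<Longrightarrow> tgt e1 = v \<Longrightarrow> tgt e2 = v \<Longrightarrow> f e1 1 = f e2 1"
    and "\<And>v. v \<in> VB \<Longrightarrow> (\<Sum>e\<in>{e. src e = v}. - d e 0) = 0"
    and "\<And>v. v \<in> VR \<Longrightarrow> (\<Sum>e\<in>{e. tgt e = v}. d e 1) = 0"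
  using assms unfolding qg_op_def
  apply (elim conjE exE)
  subgoal for d dd by (rule that[where d = d and dd = dd]; blast)
  done

lemma qg_op_diff:
  assumes "qg_op src tgt VB VR f1 h1" and "qg_op src tgt VB VR f2 h2"
  shows "qg_op src tgt VB VR (\<lambda>e x. f1 e x - f2 e x) (\<lambda>e x. h1 e x - h2 e x)"
  using assms
proof (elim qg_opE, goal_cases)
  case (1 d1 dd1 d2 dd2)
  show ?case
  proof (rule qg_opI[where d = "\<lambda>e x. d1 e x - d2 e x" and dd = "\<lambda>e x. dd1 e x - dd2 e x"])
    show "in_L2 (\<lambda>e x. f1 e x - f2 e x)" "in_L2 (\<lambda>e x. h1 e x - h2 e x)"
      "in_L2 (\<lambda>e x. dd1 e x - dd2 e x)"
      using 1 by (simp_all add: in_L2_diff)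
    fix e
    show "((\<lambda>x. f1 e x - f2 e x) has_vector_derivative d1 e x - d2 e x) (at x within {0..1})"
      if "x \<in> {0..1}" for x
      using 1(4,16) that by (intro has_vector_derivative_diff)
    show "continuous_on {0..1} (\<lambda>x. d1 e x - d2 e x)" using 1(5,17) by (intro continuous_on_diff)
    show "abs_cont_01 (\<lambda>x. d1 e x - d2 e x)" using 1(6,18) by (intro abs_cont_01_diff)
    show "AE x in lborel. x \<in> {0..1} \<longrightarrow>
        ((\<lambda>x. d1 e x - d2 e x) has_vector_derivative dd1 e x - dd2 e x) (at x within {0..1})"
      using 1(7,19)[of e] by eventually_elim (auto intro: has_vector_derivative_diff)
    show "AE x in lborel. x \<in> {0..1} \<longrightarrow> h1 e x - h2 e x = - (dd1 e x - dd2 e x)"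
      using 1(8,20)[of e] by eventually_elim auto
  next
    fix v e1 e2
    show "f1 e1 0 - f2 e1 0 = f1 e2 0 - f2 e2 0" if "v \<in> VB" "src e1 = v" "src e2 = v"
      using 1(9,21)[OF that] by simp
    show "f1 e1 1 - f2 e1 1 = f1 e2 1 - f2 e2 1" if "v \<in> VR" "tgt e1 = v" "tgt e2 = v"
      using 1(10,22)[OF that] by simp
    show "(\<Sum>e\<in>{e. src e = v}. - (d1 e 0 - d2 e 0)) = 0" if "v \<in> VB"
      using 1(11,23)[OF that] by (simp add: sum_subtractf sum_negf)
    show "(\<Sum>e\<in>{e. tgt e = v}. d1 e 1 - d2 e 1) = 0" if "v \<in> VR"
      using 1(12,24)[OF that] by (simp add: sum_subtractf)
  qed
qed

lemma resolvent_set_lower_bound: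
  assumes "lam \<in> qg_resolvent_set src tgt VB VR"
  obtains C :: real where "\<And>f h g. qg_op src tgt VB VR f h \<Longrightarrow> in_L2 g \<Longrightarrow>
      \<forall>e. AE x in lborel. x \<in> {0..1} \<longrightarrow> h e x - lam * f e x = g e x \<Longrightarrow> L2_norm f \<le> C * L2_norm g"
proof -
  obtain C :: real where
    solvable: "\<And>g. in_L2 g \<Longrightarrow> \<exists>f h. qg_op src tgt VB VR f h \<and>
          (\<forall>e. AE x in lborel. x \<in> {0..1} \<longrightarrow> h e x - lam * f e x = g e x) \<and> L2_norm f \<le> C * L2_norm g"
    and unique: "\<And>f h. qg_op src tgt VB VR f h \<Longrightarrow>
          \<forall>e. AE x in lborel. x \<in> {0..1} \<longrightarrow> h e x - lam * f e x = 0 \<Longrightarrow> L2_norm f = 0"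
    using assms unfolding qg_resolvent_set_def by blast
  show ?thesis
  proof (rule that[of C])
    fix f h g
    assume fh: "qg_op src tgt VB VR f h" and "in_L2 g"
      and eq: "\<forall>e. AE x in lborel. x \<in> {0..1} \<longrightarrow> h e x - lam * f e x = g e x"
    obtain f' h' where f'h': "qg_op src tgt VB VR f' h'"
      and eq': "\<forall>e. AE x in lborel. x \<in> {0..1} \<longrightarrow> h' e x - lam * f' e x = g e x"
      and bound: "L2_norm f' \<le> C * L2_norm g"
      using solvable[OF \<open>in_L2 g\<close>] by blast
    have "\<forall>e. AE x in lborel. x \<in> {0..1} \<longrightarrow> (h e x - h' e x) - lam * (f e x - f' e x) = 0"
    proof
      fix e
      show "AE x in lborel. x \<in> {0..1} \<longrightarrow> (h e x - h' e x) - lam * (f e x - f' e x) = 0"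
        using eq[rule_format, of e] eq'[rule_format, of e] by eventually_elim (auto simp: algebra_simps)
    qed
    then have "L2_norm (\<lambda>e x. f e x - f' e x) = 0" using unique[OF qg_op_diff[OF fh f'h']] by blast
    moreover have "in_L2 f" "in_L2 f'" using fh f'h' unfolding qg_op_def by blast+
    ultimately have "L2_norm f = L2_norm f'" by (intro L2_norm_eq_if_L2_norm_diff_eq_0)
    with bound show "L2_norm f \<le> C * L2_norm g" by simp
  qed
qed

text \<open>A quantitative Weyl criterion: approximate eigenfunctions whose norm grows faster than
  the norm of their defect rule out a bounded resolvent.\<close>

lemma not_in_resolvent_set_if_weyl_sequence:
  fixes f h g :: "nat \<Rightarrow> 'e \<Rightarrow> real \<Rightarrow> complex"
  assumes domain: "\<And>N. qg_op src tgt VB VR (f N) (h N)" and defect: "\<And>N. in_L2 (g N)"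
    and defect_eq: "\<And>N. \<forall>e. AE x in lborel. x \<in> {0..1} \<longrightarrow> h N e x - lam * f N e x = g N e x"
    and "c > 0" and growth: "\<And>N. c * (real N)\<^sup>2 \<le> (L2_norm (f N))\<^sup>2"
    and defect_bound: "\<And>N. (L2_norm (g N))\<^sup>2 \<le> K * real N"
  shows "lam \<notin> qg_resolvent_set src tgt VB VR"
proof
  assume "lam \<in> qg_resolvent_set src tgt VB VR"
  then obtain C where C: "\<And>N. L2_norm (f N) \<le> C * L2_norm (g N)"
  proof (rule resolvent_set_lower_bound)
    fix C
    assume "\<And>f h g. qg_op src tgt VB VR f h \<Longrightarrow> in_L2 g \<Longrightarrow>
      \<forall>e. AE x in lborel. x \<in> {0..1} \<longrightarrow> h e x - lam * f e x = g e x \<Longrightarrow> L2_norm f \<le> C * L2_norm g"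
    from this[OF domain defect defect_eq] show thesis by (rule that)
  qed
  have "c * real N \<le> C\<^sup>2 * K" if "N > 0" for N
  proof -
    have "c * (real N)\<^sup>2 \<le> (L2_norm (f N))\<^sup>2" by (rule growth)
    also have "\<dots> \<le> (C * L2_norm (g N))\<^sup>2" using C[of N] L2_norm_nonneg by (intro power_mono)
    also have "\<dots> = C\<^sup>2 * (L2_norm (g N))\<^sup>2" by (simp add: power_mult_distrib)
    also have "\<dots> \<le> C\<^sup>2 * (K * real N)" using defect_bound[of N] by (intro mult_left_mono) auto
    finally have "real N * (c * real N) \<le> real N * (C\<^sup>2 * K)" by (simp add: power2_eq_square ac_simps)
    then show ?thesis using that by simp
  qed
  moreover obtain N :: nat where N: "max 0 (C\<^sup>2 * K / c) < real N"
    using reals_Archimedean2 by blast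
  then have "N > 0" and "C\<^sup>2 * K < c * real N"
    using \<open>c > 0\<close> by (simp_all add: divide_less_eq mult.commute)
  ultimately show False by (meson not_le)
qed

locale weyl_construction =
  rooted_biregular_tree src tgt VB VR dB dR root + T0_eigenvector dB dR lam mu a1 a2
  for src tgt :: "'e \<Rightarrow> 'v" and VB VR dB dR root lam mu a1 a2 +
  assumes eigenvector_nonzero: "a1 \<noteq> 0 \<or> a2 \<noteq> 0"
    and mu_norm: "cmod mu = 1 / sqrt (real (dB * dR))"
begin

text \<open>Profiles are parametrised from the inner end of an edge; on edges of even level the inner
  end is the red vertex \<open>tgt e\<close>, at coordinate 1, hence the reflection \<open>z \<mapsto> 1 - z\<close>.\<close>

definition edge_profile :: "nat \<Rightarrow> 'e \<Rightarrow> complex \<Rightarrow> complex" where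
  "edge_profile N e z =
     (if even (level e) then profile N (level e) (1 - z) else profile N (level e) z)"

definition edge_profile' :: "nat \<Rightarrow> 'e \<Rightarrow> complex \<Rightarrow> complex" where
  "edge_profile' N e z =
     (if even (level e) then - profile' N (level e) (1 - z) else profile' N (level e) z)"

definition edge_profile'' :: "nat \<Rightarrow> 'e \<Rightarrow> complex \<Rightarrow> complex" where
  "edge_profile'' N e z =
     (if even (level e) then profile'' N (level e) (1 - z) else profile'' N (level e) z)"

lemma edge_profile_deriv: "(edge_profile N e has_field_derivative edge_profile' N e z) (at z)"
proof (cases "even (level e)")
  case True
  have "((\<lambda>z. profile N (level e) (1 - z)) has_field_derivative profile' N (level e) (1 - z) * -1) (at z)"
    by (rule DERIV_chain2[OF profile_deriv]) (auto intro!: derivative_eq_intros)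
  with True show ?thesis unfolding edge_profile_def[abs_def] edge_profile'_def by simp
qed (simp add: edge_profile_def[abs_def] edge_profile'_def profile_deriv)

lemma edge_profile'_deriv: "(edge_profile' N e has_field_derivative edge_profile'' N e z) (at z)"
proof (cases "even (level e)")
  case True
  have "((\<lambda>z. - profile' N (level e) (1 - z)) has_field_derivative
      - (profile'' N (level e) (1 - z) * -1)) (at z)"
    by (intro DERIV_minus DERIV_chain2[OF profile'_deriv]) (auto intro!: derivative_eq_intros)
  with True show ?thesis unfolding edge_profile'_def[abs_def] edge_profile''_def by simp
qed (simp add: edge_profile'_def[abs_def] edge_profile''_def profile'_deriv)

lemma continuous_on_edge_profile'': "continuous_on UNIV (edge_profile'' N e)"
proof -
  have "continuous_on UNIV (\<lambda>z. profile'' N (level e) (1 - z))"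
    by (rule continuous_on_compose2[OF continuous_on_profile'']) (auto intro!: continuous_intros)
  then show ?thesis
    unfolding edge_profile''_def[abs_def] using continuous_on_profile'' by (cases "even (level e)") simp_all
qed

lemma continuous_on_edge_profile: "continuous_on UNIV (edge_profile N e)"
  and continuous_on_edge_profile': "continuous_on UNIV (edge_profile' N e)"
  using DERIV_isCont[OF edge_profile_deriv] DERIV_isCont[OF edge_profile'_deriv]
  by (simp_all add: continuous_at_imp_continuous_on)

definition support :: "nat \<Rightarrow> 'e set" where "support N = (\<Union>k<4 * N. generation k)"

lemma finite_support: "finite (support N)"
  unfolding support_def using finite_generation by simp

lemma edge_profile_outside_support:
  assumes "e \<notin> support N"
  shows "edge_profile N e z = 0" and "edge_profile' N e z = 0" and "edge_profile'' N e z = 0"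
    and "amplitude_step N (level e) = 0"
proof -
  have "4 * N \<le> level e" using assms unfolding support_def generation_def by force
  then show "edge_profile N e z = 0" "edge_profile' N e z = 0" "edge_profile'' N e z = 0"
    and "amplitude_step N (level e) = 0"
    unfolding edge_profile_def edge_profile'_def edge_profile''_def
    by (simp_all add: profile_eq_0 amplitude_step_def tent_eq_0)
qed

lemma edge_profile_at_src: "edge_profile N e 0 = profile N (depth (src e)) 0"
  and edge_profile_at_tgt: "edge_profile N e 1 = profile N (depth (tgt e)) 0"
  unfolding edge_profile_def using level_even level_odd profile_junction
  by (cases "even (level e)"; simp)+

lemma kirchhoff_blue:
  assumes v: "v \<in> VB"
  shows "(\<Sum>e\<in>{e. src e = v}. - edge_profile' N e 0) = 0"
proof -
  have "v \<notin> VR" "v \<noteq> root" using v colours_disjoint root_red by blast+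
  then obtain m where m: "depth v = Suc m" "even m"
    using red_iff_even_depth by (metis even_Suc oddE odd_one plus_1_eq_Suc add.commute)
  have "(\<Sum>e\<in>incident v. - edge_profile' N e 0) = profile' N m 1 + of_nat dB * (- profile' N (Suc m) 0)"
  proof (subst sum_incident[OF \<open>v \<noteq> root\<close>])
    fix e assume "outer e = v"
    then have "even (level e)" and "level e = m"
      using outer_red_iff depth_outer[of e] \<open>v \<notin> VR\<close> m by auto
    then show "- edge_profile' N e 0 = profile' N m 1" unfolding edge_profile'_def by simp
  next
    fix e assume "inner e = v"
    then have "level e = Suc m" using depth_inner[of e] m by simp
    then show "- edge_profile' N e 0 = - profile' N (Suc m) 0" using m(2) unfolding edge_profile'_def by simp
  qed (use \<open>v \<notin> VR\<close> in simp)
  also have "\<dots> = 0" using profile'_junction[of N m] m(2) by simp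
  finally show ?thesis using incident_blue[OF v] by simp
qed

lemma kirchhoff_red:
  assumes v: "v \<in> VR"
  shows "(\<Sum>e\<in>{e. tgt e = v}. edge_profile' N e 1) = 0"
proof (cases "v = root")
  case True
  have "edge_profile' N e 1 = 0" if "e \<in> incident root" for e
  proof -
    have "level e = 0" using that depth_inner[of e] depth_eq_0_iff[of root] incident_root
      unfolding children_def by auto
    then show ?thesis unfolding edge_profile'_def by (simp add: profile'_level_0)
  qed
  then show ?thesis using incident_red[OF v] True by simp
next
  case False
  then obtain m where m: "depth v = Suc m" "odd m"
    using v red_iff_even_depth depth_eq_0_iff by (metis even_Suc not0_implies_Suc)
  have "(\<Sum>e\<in>incident v. edge_profile' N e 1) = profile' N m 1 + of_nat dR * (- profile' N (Suc m) 0)"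
  proof (subst sum_incident[OF False])
    fix e assume "outer e = v"
    then have "level e = m" using depth_outer[of e] m by simp
    then show "edge_profile' N e 1 = profile' N m 1" using m(2) unfolding edge_profile'_def by simp
  next
    fix e assume "inner e = v"
    then have "level e = Suc m" using depth_inner[of e] m by simp
    then show "edge_profile' N e 1 = - profile' N (Suc m) 0" using m(2) unfolding edge_profile'_def by simp
  qed (use v in simp)
  also have "\<dots> = 0" using profile'_junction[of N m] m(2) by simp
  finally show ?thesis using incident_red[OF v] by simp
qed

definition approx_eigenfun :: "nat \<Rightarrow> 'e \<Rightarrow> real \<Rightarrow> complex" where
  "approx_eigenfun N e x = edge_profile N e (of_real x)"

definition approx_image :: "nat \<Rightarrow> 'e \<Rightarrow> real \<Rightarrow> complex" where
  "approx_image N e x = - edge_profile'' N e (of_real x)"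

definition defect :: "nat \<Rightarrow> 'e \<Rightarrow> real \<Rightarrow> complex" where
  "defect N e x = approx_image N e x - lam * approx_eigenfun N e x"

lemma qg_op_approx_eigenfun: "qg_op src tgt VB VR (approx_eigenfun N) (approx_image N)"
proof (rule qg_opI[where d = "\<lambda>e x. edge_profile' N e (of_real x)"
      and dd = "\<lambda>e x. edge_profile'' N e (of_real x)"], safe intro!: AE_I2)
  show "in_L2 (approx_eigenfun N)" unfolding approx_eigenfun_def[abs_def]
    by (rule in_L2_if_continuous_finite_support[OF continuous_on_edge_profile finite_support
          edge_profile_outside_support(1)])
  show "in_L2 (approx_image N)" unfolding approx_image_def[abs_def]
    by (rule in_L2_if_continuous_finite_support[OF continuous_on_minus[OF continuous_on_edge_profile'']
          finite_support[of N]]) (simp add: edge_profile_outside_support)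
  show "in_L2 (\<lambda>e x. edge_profile'' N e (of_real x))"
    by (rule in_L2_if_continuous_finite_support[OF continuous_on_edge_profile'' finite_support
          edge_profile_outside_support(3)])
  fix e
  show "(approx_eigenfun N e has_vector_derivative edge_profile' N e (of_real x)) (at x within {0..1})" for x
    unfolding approx_eigenfun_def[abs_def] by (rule has_vector_derivative_real_field[OF edge_profile_deriv])
  show "((\<lambda>x. edge_profile' N e (of_real x)) has_vector_derivative edge_profile'' N e (of_real x))
      (at x within {0..1})" for x
    by (rule has_vector_derivative_real_field[OF edge_profile'_deriv])
  show "continuous_on {0..1} (\<lambda>x. edge_profile' N e (of_real x))"
    using continuous_on_of_real_comp[OF continuous_on_edge_profile'] by (rule continuous_on_subset) simp
  show "abs_cont_01 (\<lambda>x. edge_profile' N e (of_real x))"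
    using continuous_on_subset[OF continuous_on_of_real_comp[OF continuous_on_edge_profile'']]
    by (intro abs_cont_01_if_derivative[OF has_vector_derivative_real_field[OF edge_profile'_deriv]]) simp
  show "approx_image N e x = - edge_profile'' N e (of_real x)" for x
    unfolding approx_image_def ..
next
  show "(\<Sum>e\<in>{e. src e = v}. - edge_profile' N e (of_real 0)) = 0" if "v \<in> VB" for v
    using kirchhoff_blue[OF that] by simp
  show "(\<Sum>e\<in>{e. tgt e = v}. edge_profile' N e (of_real 1)) = 0" if "v \<in> VR" for v
    using kirchhoff_red[OF that] by simp
qed (auto simp: approx_eigenfun_def edge_profile_at_src edge_profile_at_tgt)

definition defect_shape :: "complex \<Rightarrow> complex" where
  "defect_shape z = smoothstep'' z * sol lam b1 b2 z + 2 * smoothstep' z * sol' lam b1 b2 z"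

lemma defect_eq: "defect N e x = - amplitude_step N (level e) * defect_shape (of_real x)"
proof -
  have "defect N e x = (if even (level e) then residual N (level e) (1 - of_real x)
      else residual N (level e) (of_real x))"
    unfolding defect_def approx_image_def approx_eigenfun_def edge_profile_def edge_profile''_def
      profile''_def by simp
  then show ?thesis
    unfolding residual_def defect_shape_def data1_def data2_def amplitude_step_def by simp
qed

definition defect_norm :: real where "defect_norm = edge_norm2 (\<lambda>x. defect_shape (of_real x))"

lemma edge_norm2_defect: "edge_norm2 (defect N e) = (cmod (amplitude_step N (level e)))\<^sup>2 * defect_norm"
  unfolding defect_norm_def defect_eq[abs_def] using edge_norm2_scale[of "- amplitude_step N (level e)"]
  by simp

lemma in_L2_defect: "in_L2 (defect N)"
proof -
  have "continuous_on UNIV defect_shape"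
    unfolding defect_shape_def[abs_def] continuous_on_eq_continuous_at[OF open_UNIV]
    by (auto intro!: continuous_intros isCont_sol isCont_sol' isCont_smoothstep' isCont_smoothstep'')
  then have "in_L2 (\<lambda>e x. - amplitude_step N (level e) * defect_shape (of_real x))"
    by (rule in_L2_if_continuous_finite_support[OF continuous_on_mult_left finite_support[of N]])
      (simp add: edge_profile_outside_support(4))
  then show ?thesis unfolding defect_eq[abs_def] .
qed

lemma norm_mu_power: "(cmod mu) ^ (2 * j) * (real dB * real dR) ^ j = 1"
proof -
  have "(cmod mu)\<^sup>2 = 1 / (real dB * real dR)" using mu_norm dB_pos dR_pos by (simp add: power_divide)
  then show ?thesis using dB_pos dR_pos by (simp add: power_mult power_divide)
qed

text \<open>Each generation carries at most a fixed amount of defect: the growth \<open>(\<delta>\<^sub>B \<delta>\<^sub>R)\<^sup>j\<close> of the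
  generation is compensated by \<open>|\<mu>|\<^sup>2\<^sup>j\<close>, and the tent profile has increments at most 1.\<close>

lemma card_generation_amplitude_step:
  "real (card (generation k)) * (cmod (amplitude_step N k))\<^sup>2 \<le> real (dR + 1) * real dB"
proof (cases "even k")
  case False
  then obtain j where k: "k = 2 * j + 1" by (metis oddE)
  have "real (card (generation k)) * (cmod (amplitude_step N k))\<^sup>2
      = real (dR + 1) * real dB * (tent N (Suc j) - tent N j)\<^sup>2 * ((cmod mu) ^ (2 * j) * (real dB * real dR) ^ j)"
    unfolding k card_generation amplitude_step_def
    by (simp add: norm_mult norm_power power_mult_distrib power_mult[symmetric] mult.commute[of 2]
        algebra_simps del: of_real_diff)
  also have "\<dots> \<le> real (dR + 1) * real dB"
    using tent_increment_bound[of N j] by (simp add: norm_mu_power mult_left_le)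
  finally show ?thesis .
qed (simp add: amplitude_step_def)

lemma defect_norm_bound: "(L2_norm (defect N))\<^sup>2 \<le> 4 * real (dR + 1) * real dB * defect_norm * real N"
proof -
  have "(L2_norm (defect N))\<^sup>2 = infsum (\<lambda>e. edge_norm2 (defect N e)) (support N)"
    unfolding L2_norm_squared
    by (rule infsum_cong_neutral) (auto simp: edge_norm2_defect edge_profile_outside_support(4))
  also have "\<dots> = (\<Sum>k<4 * N. \<Sum>e\<in>generation k. edge_norm2 (defect N e))"
    unfolding support_def using finite_generation
    by (simp add: sum.UNION_disjoint generation_def disjoint_iff)
  also have "\<dots> = (\<Sum>k<4 * N. real (card (generation k)) * (cmod (amplitude_step N k))\<^sup>2 * defect_norm)"
    by (intro sum.cong refl) (simp add: edge_norm2_defect generation_def)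
  also have "\<dots> \<le> (\<Sum>k<4 * N. real (dR + 1) * real dB * defect_norm)"
    using card_generation_amplitude_step edge_norm2_nonneg unfolding defect_norm_def
    by (intro sum_mono mult_right_mono) auto
  finally show ?thesis by (simp add: algebra_simps)
qed

definition eigen_norm :: real where "eigen_norm = edge_norm2 (\<lambda>x. sol lam a1 a2 (1 - of_real x))"

lemma eigen_norm_pos: "eigen_norm > 0"
proof -
  have "\<exists>x\<in>{0..1}. sol lam a1 a2 (of_real x) \<noteq> 0"
    using sol_data_eq_0_if_sol_vanishes eigenvector_nonzero by blast
  then obtain x where "x \<in> {0..1}" and "sol lam a1 a2 (of_real x) \<noteq> 0" by blast
  then have "1 - x \<in> {0..1}" and "sol lam a1 a2 (1 - of_real (1 - x)) \<noteq> 0" by simp_all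
  moreover have "isCont (\<lambda>x::real. sol lam a1 a2 (1 - of_real x)) x" for x
    by (rule isCont_o2[OF _ isCont_sol]) (intro continuous_intros)
  then have "continuous_on {0..1} (\<lambda>x. sol lam a1 a2 (1 - of_real x))"
    by (simp add: continuous_at_imp_continuous_on)
  ultimately show ?thesis unfolding eigen_norm_def by (intro edge_norm2_pos[of _ "1 - x"])
qed

lemma approx_eigenfun_norm_bound: "real (dR + 1) * eigen_norm * (real N)\<^sup>2 \<le> (L2_norm (approx_eigenfun N))\<^sup>2"
proof -
  have "approx_eigenfun N e = (\<lambda>x. (of_real (real N) * mu ^ N) * sol lam a1 a2 (1 - of_real x))"
    if "e \<in> generation (2 * N)" for e
    using that unfolding approx_eigenfun_def[abs_def] edge_profile_def profile_def amplitude_def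
      amplitude_step_def data1_def data2_def generation_def by simp
  then have "(\<Sum>e\<in>generation (2 * N). edge_norm2 (approx_eigenfun N e))
      = real (card (generation (2 * N))) * ((real N)\<^sup>2 * (cmod mu) ^ (2 * N) * eigen_norm)"
    by (simp add: edge_norm2_scale eigen_norm_def norm_mult norm_power power_mult_distrib
        power_mult[symmetric] mult.commute[of 2])
  also have "\<dots> = real (dR + 1) * eigen_norm * (real N)\<^sup>2 * ((cmod mu) ^ (2 * N) * (real dB * real dR) ^ N)"
    unfolding card_generation by (simp add: algebra_simps)
  also have "\<dots> = real (dR + 1) * eigen_norm * (real N)\<^sup>2"
    by (simp add: norm_mu_power)
  finally have "real (dR + 1) * eigen_norm * (real N)\<^sup>2
      = infsum (\<lambda>e. edge_norm2 (approx_eigenfun N e)) (generation (2 * N))"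
    using finite_generation by simp
  also have "\<dots> \<le> infsum (\<lambda>e. edge_norm2 (approx_eigenfun N e)) UNIV"
    using qg_op_approx_eigenfun[of N]
    by (intro infsum_mono_neutral) (auto simp: qg_op_def in_L2_def finite_generation edge_norm2_nonneg)
  finally show ?thesis unfolding L2_norm_squared .
qed

theorem not_in_resolvent_set: "lam \<notin> qg_resolvent_set src tgt VB VR"
proof (rule not_in_resolvent_set_if_weyl_sequence)
  show "qg_op src tgt VB VR (approx_eigenfun N) (approx_image N)" for N by (rule qg_op_approx_eigenfun)
  show "in_L2 (defect N)" for N by (rule in_L2_defect)
  show "\<forall>e. AE x in lborel. x \<in> {0..1} \<longrightarrow> approx_image N e x - lam * approx_eigenfun N e x = defect N e x"
    for N unfolding defect_def by simp
  show "real (dR + 1) * eigen_norm > 0" using eigen_norm_pos by simp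
qed (rule approx_eigenfun_norm_bound, rule defect_norm_bound)

end

theorem lemma4p2:
  fixes src tgt :: "'e \<Rightarrow> 'v" and VB VR :: "'v set" and dB dR :: nat and lam :: complex
  assumes "dB \<ge> 1" and "dR \<ge> 1"
    and "biregular_tree src tgt VB VR dB dR"
    and "cmod (mu_plus dB dR lam) = 1 / sqrt (real (dB * dR))
         \<or> cmod (mu_minus dB dR lam) = 1 / sqrt (real (dB * dR))"
  shows "lam \<in> qg_spectrum src tgt VB VR \<and> Im lam = 0"
proof -
  obtain mu where "mu = mu_plus dB dR lam \<or> mu = mu_minus dB dR lam"
    and mu_norm: "cmod mu = 1 / sqrt (real (dB * dR))"
    using assms(4) by blast
  then have char: "mu\<^sup>2 - tr2 (T0 dB dR lam) * mu + det (T0 dB dR lam) = 0" by (intro mu_char_poly)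
  have "\<bar>2 * Re mu\<bar> \<le> 2 / sqrt (real (dB * dR))" using abs_Re_le_cmod[of mu] mu_norm by simp
  with tr2_T0_eq_2_Re[OF assms(1,2) char mu_norm] have "Im lam = 0"
    by (intro Im_eq_0_if_tr2_T0_real_bounded[OF assms(1,2)])
  moreover obtain a1 a2 where "a1 \<noteq> 0 \<or> a2 \<noteq> 0"
    and "T0 dB dR lam $ 1 $ 1 * a1 + T0 dB dR lam $ 1 $ 2 * a2 = mu * a1"
    and "T0 dB dR lam $ 2 $ 1 * a1 + T0 dB dR lam $ 2 $ 2 * a2 = mu * a2"
    using eigenvector_2x2_exists[OF char] by blast
  moreover obtain root where "root \<in> VR"
    using assms(3) unfolding biregular_tree_def by blast
  ultimately interpret weyl_construction src tgt VB VR dB dR root lam mu a1 a2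
    using assms(1-3) mu_norm by unfold_locales auto
  show ?thesis using not_in_resolvent_set \<open>Im lam = 0\<close> unfolding qg_spectrum_def by simp
qed

end
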